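(* Let $n\ge1$, $k\ge2$ and $B\in\mathrm{GL}_n(\mathbb{R})$. There exists a $C^2_{loc}$-neighborhood $\mathcal{U}$ of $P_B$ in $\mathrm{Hom}(\Gamma_{n,k},\mathcal{D}(\mathbb{R}^n,0))$ such that $D^{(1)}_0P^a = k^{-1}I$ for all $P\in\mathcal{U}$.
   Context: $\Gamma_{n,k} = \langle a, b_1,\dots,b_n \mid a b_i a^{-1} = b_i^k,\ b_i b_j = b_j b_i\rangle$. Elements of $\mathrm{GL}_n(\mathbb{R})$ are identified with bases $B=(v_1,\dots,v_n)$ of $\mathbb{R}^n$. On $S^n=\mathbb{R}^n\cup\{\infty\}$, $\rho_B^a(x)=kx$, $\rho_B^{b_i}(x)=x+v_i$, fixing $\infty$. $\mathcal{D}(\mathbb{R}^n,0)$ is the group of germs at $0$ of local diffeomorphisms of $\mathbb{R}^n$ fixing $0$; $D^{(r)}_0F$ is the $r$-th derivative at $0$ (a symmetric $r$-linear map) with norm $\|F\|^{(r)}=\sup\{\|F(\xi_1,\dots,\xi_r)\|:\|\xi_i\|\le1\}$. The $C^2_{loc}$-topology is given by the pseudo-distance $d(F,G)=\sum_{i=1}^2\|D^{(i)}_0F-D^{(i)}_0G\|^{(i)}$, with the induced product topology on local actions $\mathrm{Hom}(\Gamma_{n,k},\mathcal{D}(\mathbb{R}^n,0))$. $\bar\phi(x)=x/\|x\|^2$ maps $S^n\setminus\{0\}$ to $\mathbb{R}^n$ with $\bar\phi(\infty)=0$, and $P_B^\gamma=\bar\phi\circ\rho_B^\gamma\circ\bar\phi^{-1}$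 as germs at $0$. *)

theory Defs
  imports "HOL-Analysis.Analysis"
begin

definition ddir :: "'a::euclidean_space \<Rightarrow> ('a \<Rightarrow> 'b::real_normed_vector) \<Rightarrow> 'a \<Rightarrow> 'b" where
  "ddir v f = (\<lambda>x. frechet_derivative f (at x) v)"

definition smooth_on :: "'a::euclidean_space set \<Rightarrow> ('a \<Rightarrow> 'b::real_normed_vector) \<Rightarrow> bool" where
  "smooth_on U f \<longleftrightarrow> (\<forall>vs. (fold ddir vs f) differentiable_on U)"

text \<open>A function representing an element of D(R^n,0): a germ at 0 of a local
  (C-infinity) diffeomorphism fixing 0.\<close>
definition local_diffeo0 :: "('a::euclidean_space \<Rightarrow> 'a) \<Rightarrow> bool" where
  "local_diffeo0 F \<longleftrightarrow> F 0 = 0 \<and>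
     (\<exists>U. open U \<and> 0 \<in> U \<and> smooth_on U F \<and> inj_on F U \<and> open (F ` U)
          \<and> smooth_on (F ` U) (the_inv_into U F))"

definition germ_eq :: "('a::topological_space \<Rightarrow> 'b) \<Rightarrow> ('a \<Rightarrow> 'b) \<Rightarrow> 'a \<Rightarrow> bool" where
  "germ_eq F G p \<longleftrightarrow> (\<forall>\<^sub>F x in nhds p. F x = G x)"

text \<open>A homomorphism Gamma_{n,k} -> D(R^n,0), given by the images A of a and
  Bs i of b_i, satisfying the defining relations as germs at 0:
  a b_i a^{-1} = b_i^k (equivalently, a b_i = b_i^k a) and b_i b_j = b_j b_i.\<close>
definition local_action ::
  "nat \<Rightarrow> (real^'n::finite \<Rightarrow> real^'n) \<Rightarrow> ('n \<Rightarrow> real^'n \<Rightarrow> real^'n) \<Rightarrow> bool" where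
  "local_action k A Bs \<longleftrightarrow> local_diffeo0 A \<and> (\<forall>i. local_diffeo0 (Bs i)) \<and>
     (\<forall>i. germ_eq (A \<circ> Bs i) ((Bs i ^^ k) \<circ> A) 0) \<and>
     (\<forall>i j. germ_eq (Bs i \<circ> Bs j) (Bs j \<circ> Bs i) 0)"

definition D1 :: "('a::euclidean_space \<Rightarrow> 'a) \<Rightarrow> 'a \<Rightarrow>\<^sub>L 'a" where
  "D1 F = Blinfun (frechet_derivative F (at 0))"

definition D2 :: "('a::euclidean_space \<Rightarrow> 'a) \<Rightarrow> 'a \<Rightarrow>\<^sub>L ('a \<Rightarrow>\<^sub>L 'a)" where
  "D2 F = Blinfun (frechet_derivative (\<lambda>x. Blinfun (frechet_derivative F (at x))) (at 0))"

definition dC2 :: "('a::euclidean_space \<Rightarrow> 'a) \<Rightarrow> ('a \<Rightarrow> 'a) \<Rightarrow> real" where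
  "dC2 F G = norm (D1 F - D1 G) + norm (D2 F - D2 G)"

text \<open>S^n = R^n plus a point at infinity, modelled as an option type (None = infinity).\<close>
type_synonym 'n sphere_pt = "(real^'n::finite) option"

definition rho_a :: "nat \<Rightarrow> ('n::finite) sphere_pt \<Rightarrow> 'n sphere_pt" where
  "rho_a k p = (case p of None \<Rightarrow> None | Some x \<Rightarrow> Some (real k *\<^sub>R x))"

definition rho_b :: "real^'n::finite^'n \<Rightarrow> 'n \<Rightarrow> 'n sphere_pt \<Rightarrow> 'n sphere_pt" where
  "rho_b B i p = (case p of None \<Rightarrow> None | Some x \<Rightarrow> Some (x + column i B))"

definition phibar :: "('n::finite) sphere_pt \<Rightarrow> real^'n" where
  "phibar p = (case p of None \<Rightarrow> 0 | Some x \<Rightarrow> (1 / (norm x)\<^sup>2) *\<^sub>R x)"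

definition phibar_inv :: "real^'n::finite \<Rightarrow> 'n sphere_pt" where
  "phibar_inv y = (if y = 0 then None else Some ((1 / (norm y)\<^sup>2) *\<^sub>R y))"

definition P_a :: "nat \<Rightarrow> real^'n::finite \<Rightarrow> real^'n" where
  "P_a k = phibar \<circ> rho_a k \<circ> phibar_inv"

definition P_b :: "real^'n::finite^'n \<Rightarrow> 'n \<Rightarrow> real^'n \<Rightarrow> real^'n" where
  "P_b B i = phibar \<circ> rho_b B i \<circ> phibar_inv"

end

theory Submission
  imports Defs
begin

text \<open>Let a and b_i be the linear parts at 0 of A and B_i. Differentiating the relation
  A \<circ> B_i = B_i^k \<circ> A gives a b_i = b_i^k a; for a near 1/k and b_i near 1, writing
  b_i = 1 + M shows (1 - 1/k) M = O(\<epsilon> |M|), so b_i = 1. Comparing the second-order Taylor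
  terms then shows that c = k a preserves the quadratic part T_i of each B_i. T_i is close to
  the quadratic part y \<mapsto> |y|^2 v_i - 2 (v_i\<bullet>y) y of P_{b_i}, with v_i the i-th column of B,
  and expanding T_i (c v_i) (c v_i) = c (T_i v_i v_i) gives |(c - 1) v_i| \<le> \<epsilon> |c - 1|.
  Since the v_i form a basis, |c - 1| \<le> C \<epsilon> |c - 1|, hence c = 1.\<close>

section \<open>Second-order jets at 0\<close>

definition little_o2 :: "('a::real_normed_vector \<Rightarrow> 'b::real_normed_vector) \<Rightarrow> bool" where
  "little_o2 R \<longleftrightarrow> (\<forall>e>0. \<exists>d>0. \<forall>x. norm x < d \<longrightarrow> norm (R x) \<le> e * (norm x)^2)"

definition jet2 :: "('a::real_normed_vector \<Rightarrow> 'b::real_normed_vector) \<Rightarrow> ('a \<Rightarrow> 'b) \<Rightarrow> ('a \<Rightarrow> 'b) \<Rightarrow> bool" where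
  "jet2 F L q \<longleftrightarrow> little_o2 (\<lambda>x. F x - L x - q x)"

definition quadratic_form :: "('a::real_normed_vector \<Rightarrow> 'b::real_normed_vector) \<Rightarrow> bool" where
  "quadratic_form q \<longleftrightarrow> (\<exists>T::'a \<Rightarrow>\<^sub>L 'a \<Rightarrow>\<^sub>L 'b. \<forall>x. q x = T x x)"

definition D2_quadratic :: "('a::euclidean_space \<Rightarrow> 'a) \<Rightarrow> 'a \<Rightarrow> 'a" where
  "D2_quadratic F y = (1/2) *\<^sub>R blinfun_apply (blinfun_apply (D2 F) y) y"

lemma norm_blinfun_bilinear:
  fixes T :: "'a::real_normed_vector \<Rightarrow>\<^sub>L 'b::real_normed_vector \<Rightarrow>\<^sub>L 'c::real_normed_vector"
  shows "norm (T x y) \<le> norm T * norm x * norm y"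
proof -
  have "norm (T x y) \<le> norm (T x) * norm y" by (rule norm_blinfun)
  also have "\<dots> \<le> norm T * norm x * norm y" by (intro mult_right_mono norm_blinfun) simp
  finally show ?thesis .
qed

lemma quadratic_form_D2_quadratic: "quadratic_form (D2_quadratic F)"
  unfolding quadratic_form_def D2_quadratic_def
  by (rule exI[of _ "(1/2) *\<^sub>R D2 F"]) (simp add: blinfun.scaleR_left)

lemma D2_quadratic_scaleR: "D2_quadratic F (t *\<^sub>R x) = t^2 *\<^sub>R D2_quadratic F x"
  by (simp add: D2_quadratic_def blinfun.scaleR_left blinfun.scaleR_right power2_eq_square)

lemma quadratic_form_scaleR:
  fixes q :: "'a::real_normed_vector \<Rightarrow> 'b::real_normed_vector"
  assumes "quadratic_form q"
  shows "quadratic_form (\<lambda>x. c *\<^sub>R q x)"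
proof -
  obtain T :: "'a \<Rightarrow>\<^sub>L 'a \<Rightarrow>\<^sub>L 'b" where "\<forall>x. q x = T x x" using assms unfolding quadratic_form_def by blast
  then show ?thesis unfolding quadratic_form_def
    by (intro exI[of _ "c *\<^sub>R T"]) (simp add: blinfun.scaleR_left)
qed

lemma quadratic_form_bounds:
  fixes q :: "'a::real_normed_vector \<Rightarrow> 'b::real_normed_vector"
  assumes "quadratic_form q"
  obtains K where "K > 0" "\<And>x. norm (q x) \<le> K * (norm x)^2"
    "\<And>x y. norm (q (x + y) - q x) \<le> K * (2 * norm x * norm y + (norm y)^2)"
proof -
  obtain T :: "'a \<Rightarrow>\<^sub>L 'a \<Rightarrow>\<^sub>L 'b" where T: "\<And>x. q x = T x x" using assms quadratic_form_def by blast
  define K where "K = norm T + 1"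
  have "K > 0" by (simp add: K_def add_nonneg_pos)
  moreover have "norm (q x) \<le> K * (norm x)^2" for x
  proof -
    have "norm (q x) \<le> norm T * (norm x)^2"
      using norm_blinfun_bilinear[of T x x] by (simp add: T power2_eq_square mult.assoc)
    also have "\<dots> \<le> K * (norm x)^2" by (intro mult_right_mono) (simp_all add: K_def)
    finally show ?thesis .
  qed
  moreover have "norm (q (x + y) - q x) \<le> K * (2 * norm x * norm y + (norm y)^2)" for x y
  proof -
    have "q (x + y) - q x = T x y + T y x + T y y"
      by (simp add: T blinfun.add_left blinfun.add_right)
    then have "norm (q (x + y) - q x) \<le> norm (T x y + T y x) + norm (T y y)"
      by (simp add: norm_triangle_ineq)
    also have "\<dots> \<le> norm (T x y) + norm (T y x) + norm (T y y)"
      by (intro add_right_mono norm_triangle_ineq)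
    also have "\<dots> \<le> norm T * norm x * norm y + norm T * norm y * norm x + norm T * norm y * norm y"
      by (intro add_mono norm_blinfun_bilinear)
    also have "\<dots> = norm T * (2 * norm x * norm y + (norm y)^2)"
      by (simp add: algebra_simps power2_eq_square)
    also have "\<dots> \<le> K * (2 * norm x * norm y + (norm y)^2)"
      by (intro mult_right_mono) (auto simp: K_def)
    finally show ?thesis .
  qed
  ultimately show ?thesis using that by blast
qed

text \<open>In finite dimension the blinfun-valued derivative is a finite sum of its columns,
  so differentiability of every directional derivative suffices.\<close>
lemma has_derivative_Blinfun_frechet_derivative:
  fixes F :: "'a::euclidean_space \<Rightarrow> 'a"
  assumes U: "open U" "0 \<in> U"
    and dU: "\<forall>x\<in>U. F differentiable (at x)"
    and dG: "\<forall>e. (\<lambda>x. frechet_derivative F (at x) e) differentiable (at 0)"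
  shows "((\<lambda>x. Blinfun (frechet_derivative F (at x))) has_derivative blinfun_apply (D2 F)) (at 0)"
proof -
  define F' where "F' x = frechet_derivative F (at x)" for x
  have Fbl: "bounded_linear (F' x)" if "x \<in> U" for x
    unfolding F'_def using dU that frechet_derivative_works has_derivative_bounded_linear by blast
  obtain g' where g': "\<And>e. ((\<lambda>x. F' x e) has_derivative g' e) (at 0)"
    using dG unfolding F'_def differentiable_def by metis
  define \<Phi> where "\<Phi> e w = blinfun_scaleR_left w o\<^sub>L blinfun_inner_left e" for e :: 'a and w :: 'a
  have \<Phi>bl: "bounded_linear (\<Phi> e)" for e
    unfolding \<Phi>_def
    by (intro bounded_linear_compose[OF bounded_bilinear.bounded_linear_left[OF bounded_bilinear_blinfun_compose]] bounded_linear_blinfun_scaleR_left)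
  define H where "H x = (\<Sum>e\<in>Basis. \<Phi> e (F' x e))" for x
  define H' where "H' h = (\<Sum>e\<in>Basis. \<Phi> e (g' e h))" for h
  have Hd: "(H has_derivative H') (at 0)"
    unfolding H_def H'_def
    by (intro has_derivative_sum bounded_linear.has_derivative[OF \<Phi>bl] g')
  have "Blinfun (F' x) = H x" if "x \<in> U" for x
  proof (rule blinfun_eqI)
    fix h
    have "F' x h = F' x (\<Sum>e\<in>Basis. (h \<bullet> e) *\<^sub>R e)" by (simp add: euclidean_representation)
    also have "\<dots> = (\<Sum>e\<in>Basis. (h \<bullet> e) *\<^sub>R F' x e)"
      using Fbl[OF that] by (simp add: linear_sum linear_scale bounded_linear.linear)
    finally show "blinfun_apply (Blinfun (F' x)) h = blinfun_apply (H x) h"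
      using Fbl[OF that] by (simp add: bounded_linear_Blinfun_apply H_def \<Phi>_def blinfun.sum_left)
  qed
  then have Gd: "((\<lambda>x. Blinfun (F' x)) has_derivative H') (at 0)"
    using has_derivative_transform_within_open[OF Hd U] by metis
  have "bounded_linear H'" using Hd has_derivative_bounded_linear by blast
  then have "blinfun_apply (D2 F) = H'"
    unfolding D2_def F'_def[symmetric] using frechet_derivative_at[OF Gd]
    by (metis bounded_linear_Blinfun_apply)
  with Gd show ?thesis by (simp add: F'_def)
qed

lemma jet2_from_second_derivative:
  fixes F :: "'a::euclidean_space \<Rightarrow> 'a"
  assumes U: "open U" "0 \<in> U" and F0: "F 0 = 0"
    and Fd: "\<And>x. x \<in> U \<Longrightarrow> (F has_derivative F' x) (at x)"
    and Gd: "((\<lambda>x. Blinfun (F' x)) has_derivative H') (at 0)"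
  shows "jet2 F (F' 0) (\<lambda>y. (1/2) *\<^sub>R H' y y)"
  unfolding jet2_def little_o2_def
proof (intro allI impI)
  fix e :: real assume e: "e > 0"
  have Fbl: "bounded_linear (F' x)" if "x \<in> U" for x
    using Fd[OF that] has_derivative_bounded_linear by blast
  have H'bl: "bounded_linear H'" using Gd has_derivative_bounded_linear by blast
  obtain d1 where d1: "d1 > 0" "\<And>z. norm z < d1 \<Longrightarrow> norm (Blinfun (F' z) - Blinfun (F' 0) - H' z) \<le> e * norm z"
    using Gd e unfolding has_derivative_at_alt by (metis diff_zero)
  obtain d2 where d2: "d2 > 0" "ball 0 d2 \<subseteq> U" using U openE by blast
  show "\<exists>d>0. \<forall>y. norm y < d \<longrightarrow> norm (F y - F' 0 y - (1/2) *\<^sub>R H' y y) \<le> e * (norm y)^2"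
  proof (intro exI[of _ "min d1 d2"] conjI allI impI)
    show "min d1 d2 > 0" using d1 d2 by simp
    fix y :: 'a assume y: "norm y < min d1 d2"
    have short: "norm (t *\<^sub>R y) \<le> norm y" if "t \<in> {0..1}" for t
      using that by (auto intro: mult_left_le_one_le)
    have tyU: "t *\<^sub>R y \<in> U" if "t \<in> {0..1}" for t
      using short[OF that] y d2 by (auto simp: dist_norm)
    define f where "f t = F (t *\<^sub>R y) - (t^2/2) *\<^sub>R H' y y" for t
    define f' where "f' t = F' (t *\<^sub>R y) y - t *\<^sub>R H' y y" for t
    have fd: "(f has_vector_derivative f' t) (at t within {0..1})" if "t \<in> {0..1}" for t
    proof -
      have "((\<lambda>t. F (t *\<^sub>R y)) has_derivative (\<lambda>s. F' (t *\<^sub>R y) (s *\<^sub>R y))) (at t within {0..1})"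
        using has_derivative_compose[OF has_derivative_scaleR_left[OF has_derivative_ident] Fd[OF tyU[OF that]]] .
      moreover have "((\<lambda>t. (t^2/2) *\<^sub>R H' y y) has_derivative (\<lambda>s. (s * t) *\<^sub>R H' y y)) (at t within {0..1})"
        by (auto intro!: derivative_eq_intros)
      ultimately have "(f has_derivative (\<lambda>s. F' (t *\<^sub>R y) (s *\<^sub>R y) - (s * t) *\<^sub>R H' y y)) (at t within {0..1})"
        unfolding f_def by (rule has_derivative_diff)
      moreover have "(\<lambda>s. F' (t *\<^sub>R y) (s *\<^sub>R y) - (s * t) *\<^sub>R H' y y) = (\<lambda>s. s *\<^sub>R f' t)"
        using linear.scaleR[OF bounded_linear.linear[OF Fbl[OF tyU[OF that]]]]
        by (auto simp: f'_def algebra_simps)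
      ultimately show ?thesis unfolding has_vector_derivative_def by simp
    qed
    have bd: "norm (f' t - f' 0) \<le> e * (norm y)^2" if "t \<in> {0..1}" for t
    proof -
      have "f' t - f' 0 = blinfun_apply (Blinfun (F' (t *\<^sub>R y)) - Blinfun (F' 0) - H' (t *\<^sub>R y)) y"
        using Fbl[OF tyU[OF that]] Fbl[OF U(2)] H'bl
        by (simp add: f'_def bounded_linear_Blinfun_apply blinfun.diff_left
            linear.scaleR[OF bounded_linear.linear[OF H'bl]] blinfun.scaleR_left)
      also have "norm \<dots> \<le> norm (Blinfun (F' (t *\<^sub>R y)) - Blinfun (F' 0) - H' (t *\<^sub>R y)) * norm y"
        by (rule norm_blinfun)
      also have "\<dots> \<le> (e * norm (t *\<^sub>R y)) * norm y"
        by (intro mult_right_mono d1(2)) (use short[OF that] y in auto)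
      also have "\<dots> \<le> (e * norm y) * norm y"
        using short[OF that] e by (intro mult_right_mono mult_left_mono) auto
      finally show ?thesis by (simp add: power2_eq_square mult.assoc)
    qed
    have "norm (f 1 - f 0 - (1 - 0) *\<^sub>R f' 0) \<le> norm (1 - 0::real) * (e * (norm y)^2)"
      by (rule vector_differentiable_bound_linearization[OF fd _ bd])
        (auto simp: closed_segment_eq_real_ivl)
    then show "norm (F y - F' 0 y - (1/2) *\<^sub>R H' y y) \<le> e * (norm y)^2"
      by (simp add: f_def f'_def F0 algebra_simps)
  qed
qed

lemma jet2_D1_D2:
  fixes F :: "'a::euclidean_space \<Rightarrow> 'a"
  assumes U: "open U" "0 \<in> U" and F0: "F 0 = 0"
    and dU: "\<forall>x\<in>U. F differentiable (at x)"
    and dG: "\<forall>e. (\<lambda>x. frechet_derivative F (at x) e) differentiable (at 0)"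
  shows "jet2 F (blinfun_apply (D1 F)) (D2_quadratic F)"
proof -
  have Fd: "(F has_derivative frechet_derivative F (at x)) (at x)" if "x \<in> U" for x
    using dU that frechet_derivative_works by blast
  then have "blinfun_apply (D1 F) = frechet_derivative F (at 0)"
    unfolding D1_def
    by (simp add: bounded_linear_Blinfun_apply[OF has_derivative_bounded_linear[OF Fd[OF U(2)]]])
  then show ?thesis
    using jet2_from_second_derivative[OF U F0 Fd has_derivative_Blinfun_frechet_derivative[OF U dU dG]]
    unfolding D2_quadratic_def[abs_def] by simp
qed

lemma little_o2_cong:
  assumes "\<forall>\<^sub>F x in nhds 0. R x = S x" and "little_o2 R"
  shows "little_o2 S"
  unfolding little_o2_def
proof (intro allI impI)
  fix e :: real assume "e > 0"
  then obtain d where d: "d > 0" "\<forall>x. norm x < d \<longrightarrow> norm (R x) \<le> e * (norm x)^2"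
    using assms(2) unfolding little_o2_def by blast
  obtain d0 where d0: "d0 > 0" "\<And>x. norm x < d0 \<Longrightarrow> R x = S x"
    using assms(1) unfolding eventually_nhds_metric by (auto simp: dist_norm)
  show "\<exists>d>0. \<forall>x. norm x < d \<longrightarrow> norm (S x) \<le> e * (norm x)^2"
    using d d0 by (intro exI[of _ "min d d0"]) auto
qed

lemma little_o2_add:
  fixes R S :: "'a::real_normed_vector \<Rightarrow> 'b::real_normed_vector"
  assumes "little_o2 R" and "little_o2 S"
  shows "little_o2 (\<lambda>x. R x + S x)"
  unfolding little_o2_def
proof (intro allI impI)
  fix e :: real assume "e > 0"
  then have "e/2 > 0" by simp
  then obtain d1 d2 where d1: "d1 > 0" "\<forall>x. norm x < d1 \<longrightarrow> norm (R x) \<le> e/2 * (norm x)^2"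
    and d2: "d2 > 0" "\<forall>x. norm x < d2 \<longrightarrow> norm (S x) \<le> e/2 * (norm x)^2"
    using assms unfolding little_o2_def by blast
  show "\<exists>d>0. \<forall>x. norm x < d \<longrightarrow> norm (R x + S x) \<le> e * (norm x)^2"
  proof (intro exI[of _ "min d1 d2"] conjI allI impI)
    fix x :: 'a assume "norm x < min d1 d2"
    then have "norm (R x) \<le> e/2 * (norm x)^2" "norm (S x) \<le> e/2 * (norm x)^2" using d1 d2 by auto
    then show "norm (R x + S x) \<le> e * (norm x)^2" using norm_triangle_ineq[of "R x" "S x"] by linarith
  qed (use d1 d2 in auto)
qed

lemma little_o2_diff:
  fixes R S :: "'a::real_normed_vector \<Rightarrow> 'b::real_normed_vector"
  assumes "little_o2 R" and "little_o2 S"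
  shows "little_o2 (\<lambda>x. R x - S x)"
proof -
  have "little_o2 (\<lambda>x. - S x)" using assms(2) unfolding little_o2_def by simp
  from little_o2_add[OF assms(1) this] show ?thesis by simp
qed

lemma little_o2_bounded_linear:
  fixes R :: "'a::real_normed_vector \<Rightarrow> 'b::real_normed_vector"
  assumes L: "bounded_linear L" and R: "little_o2 R"
  shows "little_o2 (\<lambda>x. L (R x))"
  unfolding little_o2_def
proof (intro allI impI)
  fix e :: real assume e: "e > 0"
  obtain K where K: "K > 0" "\<And>y. norm (L y) \<le> norm y * K"
    using bounded_linear.pos_bounded[OF L] by blast
  have "e / K > 0" using e K by simp
  then obtain d where d: "d > 0" "\<forall>x. norm x < d \<longrightarrow> norm (R x) \<le> e / K * (norm x)^2"
    using R unfolding little_o2_def by blast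
  show "\<exists>d>0. \<forall>x. norm x < d \<longrightarrow> norm (L (R x)) \<le> e * (norm x)^2"
  proof (intro exI[of _ d] conjI allI impI)
    fix x :: 'a assume "norm x < d"
    have "norm (L (R x)) \<le> norm (R x) * K" by (rule K(2))
    also have "\<dots> \<le> (e / K * (norm x)^2) * K"
      using d(2) \<open>norm x < d\<close> K(1) by (intro mult_right_mono) auto
    finally show "norm (L (R x)) \<le> e * (norm x)^2" using K by simp
  qed (rule d(1))
qed

lemma little_o2_compose:
  fixes R :: "'b::real_normed_vector \<Rightarrow> 'c::real_normed_vector" and G :: "'a::real_normed_vector \<Rightarrow> 'b"
  assumes R: "little_o2 R" and K: "K > 0" "d0 > 0" "\<And>x. norm x < d0 \<Longrightarrow> norm (G x) \<le> K * norm x"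
  shows "little_o2 (\<lambda>x. R (G x))"
  unfolding little_o2_def
proof (intro allI impI)
  fix e :: real assume e: "e > 0"
  have "e / K^2 > 0" using e K by simp
  then obtain d where d: "d > 0" "\<forall>y. norm y < d \<longrightarrow> norm (R y) \<le> e / K^2 * (norm y)^2"
    using R unfolding little_o2_def by blast
  show "\<exists>d>0. \<forall>x. norm x < d \<longrightarrow> norm (R (G x)) \<le> e * (norm x)^2"
  proof (intro exI[of _ "min d0 (d / K)"] conjI allI impI)
    show "min d0 (d / K) > 0" using K d by simp
    fix x :: 'a assume x: "norm x < min d0 (d / K)"
    have Gx: "norm (G x) \<le> K * norm x" using K(3) x by simp
    also have "\<dots> < d" using x K by (simp add: field_simps)
    finally have "norm (R (G x)) \<le> e / K^2 * (norm (G x))^2" using d by simp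
    also have "\<dots> \<le> e / K^2 * (K * norm x)^2" using Gx e K by (intro mult_left_mono power_mono) auto
    also have "\<dots> = e * (norm x)^2" using K by (simp add: power_mult_distrib)
    finally show "norm (R (G x)) \<le> e * (norm x)^2" .
  qed
qed

lemma little_o2_cubic_bound:
  fixes R :: "'a::real_normed_vector \<Rightarrow> 'b::real_normed_vector"
  assumes "d0 > 0" and "\<And>x. norm x < d0 \<Longrightarrow> norm (R x) \<le> C * (norm x)^3"
  shows "little_o2 R"
  unfolding little_o2_def
proof (intro allI impI)
  fix e :: real assume e: "e > 0"
  show "\<exists>d>0. \<forall>x. norm x < d \<longrightarrow> norm (R x) \<le> e * (norm x)^2"
  proof (intro exI[of _ "min d0 (e / (\<bar>C\<bar> + 1))"] conjI allI impI)
    show "min d0 (e / (\<bar>C\<bar> + 1)) > 0" using assms(1) e by simp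
    fix x :: 'a assume x: "norm x < min d0 (e / (\<bar>C\<bar> + 1))"
    have "norm (R x) \<le> C * (norm x)^3" using assms(2) x by simp
    also have "\<dots> \<le> (\<bar>C\<bar> + 1) * (norm x)^3" by (intro mult_right_mono) auto
    also have "\<dots> = ((\<bar>C\<bar> + 1) * norm x) * (norm x)^2"
      by (simp add: power3_eq_cube power2_eq_square)
    also have "\<dots> \<le> e * (norm x)^2"
      using x by (intro mult_right_mono) (auto simp: field_simps)
    finally show "norm (R x) \<le> e * (norm x)^2" .
  qed
qed

lemma jet2_first_order:
  assumes "jet2 G M r" and "quadratic_form r"
  obtains K d where "K > 0" "d > 0" "\<And>x. norm x < d \<Longrightarrow> norm (G x - M x) \<le> K * (norm x)^2"
proof -
  obtain Kr where Kr: "Kr > 0" "\<And>x. norm (r x) \<le> Kr * (norm x)^2"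
    using quadratic_form_bounds[OF assms(2)] by metis
  obtain d where d: "d > 0" "\<forall>x. norm x < d \<longrightarrow> norm (G x - M x - r x) \<le> 1 * (norm x)^2"
    using assms(1) unfolding jet2_def little_o2_def by (meson zero_less_one)
  have "norm (G x - M x) \<le> (1 + Kr) * (norm x)^2" if "norm x < d" for x
  proof -
    have "norm (G x - M x) \<le> norm (G x - M x - r x) + norm (r x)"
      using norm_triangle_ineq[of "G x - M x - r x" "r x"] by simp
    then show ?thesis using d(2)[rule_format, OF that] Kr(2)[of x] by (simp add: algebra_simps)
  qed
  then show ?thesis using that[of "1 + Kr" d] Kr d by simp
qed

lemma little_o2_quadratic_form_diff:
  fixes q :: "'b::real_normed_vector \<Rightarrow> 'c::real_normed_vector" and G :: "'a::real_normed_vector \<Rightarrow> 'b"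
  assumes q: "quadratic_form q" and M: "bounded_linear M"
    and K: "d0 > 0" "\<And>x. norm x < d0 \<Longrightarrow> norm (G x - M x) \<le> K * (norm x)^2"
  shows "little_o2 (\<lambda>x. q (G x) - q (M x))"
proof -
  obtain Kq where Kq: "Kq > 0" "\<And>x y. norm (q (x + y) - q x) \<le> Kq * (2 * norm x * norm y + (norm y)^2)"
    using quadratic_form_bounds[OF q] by metis
  obtain KM where KM: "KM > 0" "\<And>x. norm (M x) \<le> norm x * KM"
    using bounded_linear.pos_bounded[OF M] by blast
  show ?thesis
  proof (rule little_o2_cubic_bound[of "min d0 1"])
    show "min d0 1 > (0::real)" using K(1) by simp
    fix x :: 'a assume x: "norm x < min d0 1"
    define y where "y = G x - M x"
    have y: "norm y \<le> K * (norm x)^2" using K(2) x by (simp add: y_def)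
    have "norm (q (G x) - q (M x)) \<le> Kq * (2 * norm (M x) * norm y + (norm y)^2)"
      using Kq(2)[of "M x" y] by (simp add: y_def)
    also have "\<dots> \<le> Kq * (2 * (norm x * KM) * (K * (norm x)^2) + (K * (norm x)^2)^2)"
      using KM(2)[of x] y Kq(1) KM(1) by (intro mult_left_mono add_mono mult_mono power_mono) auto
    also have "\<dots> \<le> Kq * ((2 * KM * K + K^2) * (norm x)^3)"
    proof (rule mult_left_mono)
      have "(norm x)^4 \<le> (norm x)^3" using x by (simp add: power_decreasing)
      then have "(K * (norm x)^2)^2 \<le> K^2 * (norm x)^3"
        by (simp add: power_mult_distrib mult_left_mono flip: power_mult)
      moreover have "2 * (norm x * KM) * (K * (norm x)^2) = 2 * KM * K * (norm x)^3"
        by (simp add: power2_eq_square power3_eq_cube algebra_simps)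
      ultimately show "2 * (norm x * KM) * (K * (norm x)^2) + (K * (norm x)^2)^2
          \<le> (2 * KM * K + K^2) * (norm x)^3"
        by (simp only: distrib_right)
    qed (use Kq(1) in simp)
    finally show "norm (q (G x) - q (M x)) \<le> Kq * (2 * KM * K + K^2) * (norm x)^3"
      by (simp add: mult.assoc)
  qed
qed

lemma jet2_compose:
  fixes F :: "'b::real_normed_vector \<Rightarrow> 'c::real_normed_vector" and G :: "'a::real_normed_vector \<Rightarrow> 'b"
  assumes JF: "jet2 F L q" and JG: "jet2 G M r"
    and bL: "bounded_linear L" and bM: "bounded_linear M"
    and qq: "quadratic_form q" and qr: "quadratic_form r"
  shows "jet2 (\<lambda>x. F (G x)) (\<lambda>x. L (M x)) (\<lambda>x. L (r x) + q (M x))"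
proof -
  obtain K d where K: "K > 0" "d > 0" "\<And>x. norm x < d \<Longrightarrow> norm (G x - M x) \<le> K * (norm x)^2"
    using jet2_first_order[OF JG qr] by blast
  obtain KM where KM: "KM > 0" "\<And>x. norm (M x) \<le> norm x * KM"
    using bounded_linear.pos_bounded[OF bM] by blast
  have "norm (G x) \<le> (KM + K) * norm x" if "norm x < min d 1" for x
  proof -
    have "norm (G x) \<le> norm (M x) + norm (G x - M x)" using norm_triangle_ineq[of "M x" "G x - M x"] by simp
    also have "\<dots> \<le> norm x * KM + K * (norm x * norm x)"
      using KM(2)[of x] K(3)[of x] that by (simp add: power2_eq_square)
    also have "K * (norm x * norm x) \<le> K * norm x"
      using that K(1) by (intro mult_left_mono mult_left_le_one_le) auto
    finally show ?thesis by (simp add: algebra_simps)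
  qed
  then have "little_o2 (\<lambda>x. F (G x) - L (G x) - q (G x))"
    using little_o2_compose[OF JF[unfolded jet2_def], of "KM + K" "min d 1" G] K KM by simp
  moreover have "little_o2 (\<lambda>x. L (G x - M x - r x))"
    using little_o2_bounded_linear[OF bL] JG unfolding jet2_def by blast
  moreover have "little_o2 (\<lambda>x. q (G x) - q (M x))"
    by (rule little_o2_quadratic_form_diff[OF qq bM K(2,3)])
  ultimately have "little_o2 (\<lambda>x. (F (G x) - L (G x) - q (G x)) + L (G x - M x - r x) + (q (G x) - q (M x)))"
    by (intro little_o2_add)
  then show ?thesis
    unfolding jet2_def by (simp add: linear_diff[OF bounded_linear.linear[OF bL]]
        linear_add[OF bounded_linear.linear[OF bL]] algebra_simps)
qed

lemma poly2_little_o_imp_zero: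
  fixes a b :: "'a::real_normed_vector"
  assumes H: "\<forall>e>0. \<exists>d>0. \<forall>t. 0 < t \<and> t < d \<longrightarrow> norm (t *\<^sub>R a + t^2 *\<^sub>R b) \<le> e * t^2"
  shows "a = 0 \<and> b = 0"
proof -
  have a: "a = 0"
  proof (rule ccontr)
    assume na: "a \<noteq> 0"
    obtain d where d: "d > 0" "\<And>t. 0 < t \<Longrightarrow> t < d \<Longrightarrow> norm (t *\<^sub>R a + t^2 *\<^sub>R b) \<le> 1 * t^2"
      using H by (meson zero_less_one)
    define t where "t = min (d/2) (norm a / (2 * (norm b + 1)))"
    have pb: "2 * (norm b + 1) > 0" by (intro mult_pos_pos add_nonneg_pos) auto
    have "norm a / (2 * (norm b + 1)) > 0" using na pb by (intro divide_pos_pos) auto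
    then have tpos: "t > 0" using d by (simp add: t_def)
    have "t < d" using d by (simp add: t_def)
    then have small: "norm (t *\<^sub>R a + t^2 *\<^sub>R b) \<le> t^2" using d tpos by simp
    have "t * norm a = norm (t *\<^sub>R a)" using tpos by simp
    also have "\<dots> \<le> norm (t *\<^sub>R a + t^2 *\<^sub>R b) + norm (t^2 *\<^sub>R b)"
      by (metis add_diff_cancel_right' norm_triangle_ineq4)
    also have "\<dots> \<le> t^2 + t^2 * norm b" using small by simp
    finally have "t * norm a \<le> t * (t * (1 + norm b))" by (simp add: power2_eq_square algebra_simps)
    then have "norm a \<le> t * (1 + norm b)" using tpos by simp
    moreover have "t * (1 + norm b) \<le> norm a / 2"
    proof -
      have "t \<le> norm a / (2 * (norm b + 1))" by (simp add: t_def)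
      then have "t * (1 + norm b) \<le> norm a / (2 * (norm b + 1)) * (1 + norm b)"
        by (intro mult_right_mono) auto
      also have "\<dots> = norm a / 2" using pb by (simp add: field_simps)
      finally show ?thesis .
    qed
    ultimately show False using na zero_less_norm_iff[of a] by linarith
  qed
  have "norm b \<le> e" if e: "e > 0" for e
  proof -
    obtain d where d: "d > 0" "\<And>t. 0 < t \<Longrightarrow> t < d \<Longrightarrow> norm (t *\<^sub>R a + t^2 *\<^sub>R b) \<le> e * t^2"
      using H e by meson
    have "norm ((d/2)^2 *\<^sub>R b) \<le> e * (d/2)^2" using d(2)[of "d/2"] d(1) a by simp
    then show ?thesis using d(1) by simp
  qed
  then have "b = 0"
    by (metis dense not_le norm_le_zero_iff)
  with a show ?thesis by simp
qed

lemma little_o2_linear_plus_quadratic: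
  assumes D: "linear D" and Q: "\<And>t x. Q (t *\<^sub>R x) = t^2 *\<^sub>R Q x"
    and o: "little_o2 (\<lambda>x. D x + Q x)"
  shows "D y = 0 \<and> Q y = 0"
proof -
  have "\<forall>e>0. \<exists>d>0. \<forall>t. 0 < t \<and> t < d \<longrightarrow> norm (t *\<^sub>R D y + t^2 *\<^sub>R Q y) \<le> e * t^2"
  proof (intro allI impI)
    fix e :: real assume e: "e > 0"
    have ny: "(norm y)^2 + 1 > 0" "norm y + 1 > 0" by (simp_all add: add_nonneg_pos)
    then have "e / ((norm y)^2 + 1) > 0" using e by simp
    then obtain d where d: "d > 0"
      "\<forall>x. norm x < d \<longrightarrow> norm (D x + Q x) \<le> e / ((norm y)^2 + 1) * (norm x)^2"
      using o unfolding little_o2_def by blast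
    show "\<exists>d>0. \<forall>t. 0 < t \<and> t < d \<longrightarrow> norm (t *\<^sub>R D y + t^2 *\<^sub>R Q y) \<le> e * t^2"
    proof (intro exI[of _ "d / (norm y + 1)"] conjI allI impI)
      show "d / (norm y + 1) > 0" using d ny by simp
      fix t :: real assume t: "0 < t \<and> t < d / (norm y + 1)"
      have "norm (t *\<^sub>R y) \<le> t * (norm y + 1)" using t by simp
      also have "\<dots> < d" using t ny by (simp add: field_simps)
      finally have "norm (D (t *\<^sub>R y) + Q (t *\<^sub>R y)) \<le> e / ((norm y)^2 + 1) * (norm (t *\<^sub>R y))^2"
        using d by blast
      also have "\<dots> = e * t^2 * ((norm y)^2 / ((norm y)^2 + 1))"
        using t by (simp add: power_mult_distrib)
      also have "\<dots> \<le> e * t^2 * 1"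
        using e ny by (intro mult_left_mono) auto
      finally show "norm (t *\<^sub>R D y + t^2 *\<^sub>R Q y) \<le> e * t^2"
        using linear.scaleR[OF D] Q by simp
    qed
  qed
  then show ?thesis by (rule poly2_little_o_imp_zero)
qed

lemma jet2_unique:
  assumes J1: "jet2 F L q" and J2: "jet2 G L' q'" and E: "\<forall>\<^sub>F x in nhds 0. F x = G x"
    and lin: "linear L" "linear L'"
    and hq: "\<And>t x. q (t *\<^sub>R x) = t^2 *\<^sub>R q x" "\<And>t x. q' (t *\<^sub>R x) = t^2 *\<^sub>R q' x"
  shows "L = L'" "q = q'"
proof -
  have "little_o2 (\<lambda>x. (L x - L' x) + (q x - q' x))"
  proof (rule little_o2_cong)
    show "little_o2 (\<lambda>x. (G x - L' x - q' x) - (F x - L x - q x))"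
      using little_o2_diff J1 J2 unfolding jet2_def by blast
    show "\<forall>\<^sub>F x in nhds 0. (G x - L' x - q' x) - (F x - L x - q x) = (L x - L' x) + (q x - q' x)"
      using E by eventually_elim (simp add: algebra_simps)
  qed
  note o = this
  have "linear (\<lambda>x. L x - L' x)" using lin by (rule linear_compose_sub)
  moreover have "q (t *\<^sub>R x) - q' (t *\<^sub>R x) = t^2 *\<^sub>R (q x - q' x)" for t x
    by (simp add: hq scaleR_diff_right)
  ultimately have "L x - L' x = 0 \<and> q x - q' x = 0" for x
    using little_o2_linear_plus_quadratic[OF _ _ o] by blast
  then show "L = L'" "q = q'" by auto
qed

lemma local_diffeo0_jet2:
  fixes F :: "'a::euclidean_space \<Rightarrow> 'a"
  assumes "local_diffeo0 F"
  shows "F 0 = 0" "(F has_derivative blinfun_apply (D1 F)) (at 0)"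
    "jet2 F (blinfun_apply (D1 F)) (D2_quadratic F)"
proof -
  obtain U where U: "open U" "0 \<in> U" "smooth_on U F" and F0: "F 0 = 0"
    using assms unfolding local_diffeo0_def by blast
  have dU: "\<forall>x\<in>U. F differentiable (at x)"
    using U spec[OF U(3)[unfolded smooth_on_def], of "[]"]
    by (simp add: differentiable_on_eq_differentiable_at)
  have dG: "\<forall>e. (\<lambda>x. frechet_derivative F (at x) e) differentiable (at 0)"
  proof
    fix e
    have "ddir e F differentiable_on U" using spec[OF U(3)[unfolded smooth_on_def], of "[e]"] by simp
    then show "(\<lambda>x. frechet_derivative F (at x) e) differentiable (at 0)"
      using U by (simp add: differentiable_on_eq_differentiable_at ddir_def)
  qed
  show "F 0 = 0" by (rule F0)
  show "jet2 F (blinfun_apply (D1 F)) (D2_quadratic F)"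
    by (rule jet2_D1_D2[OF U(1,2) F0 dU dG])
  have "(F has_derivative frechet_derivative F (at 0)) (at 0)"
    using dU U(2) frechet_derivative_works by blast
  moreover then have "blinfun_apply (D1 F) = frechet_derivative F (at 0)"
    unfolding D1_def by (simp add: bounded_linear_Blinfun_apply has_derivative_bounded_linear)
  ultimately show "(F has_derivative blinfun_apply (D1 F)) (at 0)" by simp
qed

lemma has_derivative_funpow:
  fixes B b :: "'a::real_normed_vector \<Rightarrow> 'a"
  assumes "(B has_derivative b) (at 0)" "B 0 = 0"
  shows "((B ^^ m) has_derivative (b ^^ m)) (at 0) \<and> (B ^^ m) 0 = 0"
proof (induction m)
  case 0
  have "B ^^ 0 = (\<lambda>x. x)" "b ^^ 0 = (\<lambda>x. x)" by auto
  then show ?case by (simp add: has_derivative_ident)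
next
  case (Suc m)
  then have "((\<lambda>x. B ((B ^^ m) x)) has_derivative (\<lambda>x. b ((b ^^ m) x))) (at 0)"
    using has_derivative_compose[of "B ^^ m" "b ^^ m" 0 UNIV B b] assms by simp
  then show ?case using Suc assms by (simp add: comp_def)
qed

lemma jet2_funpow:
  fixes B :: "'a::real_normed_vector \<Rightarrow> 'a"
  assumes J: "jet2 B (\<lambda>x. x) q" and Q: "quadratic_form q"
  shows "jet2 (B ^^ m) (\<lambda>x. x) (\<lambda>x. real m *\<^sub>R q x)"
proof (induction m)
  case 0 then show ?case by (simp add: jet2_def little_o2_def)
next
  case (Suc m)
  have "jet2 (\<lambda>x. B ((B ^^ m) x)) (\<lambda>x. x) (\<lambda>x. real m *\<^sub>R q x + q x)"
    using jet2_compose[OF J Suc bounded_linear_ident bounded_linear_ident Q quadratic_form_scaleR[OF Q]] by simp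
  then show ?case by (simp add: algebra_simps)
qed

lemma has_derivative_germ_unique:
  assumes "(F has_derivative f) (at 0)" "(G has_derivative g) (at 0)" "\<forall>\<^sub>F x in nhds 0. F x = G x"
  shows "f = g"
proof -
  obtain d where d: "d > 0" "\<And>x. dist x 0 < d \<Longrightarrow> F x = G x"
    using assms(3) unfolding eventually_nhds_metric by auto
  have "(G has_derivative f) (at 0)"
    using has_derivative_transform_within[of F f 0 UNIV d G] assms(1) d by auto
  then show ?thesis using has_derivative_unique assms(2) by blast
qed

section \<open>The model action P_B\<close>

text \<open>Conjugating the translation by v with the inversion y \<mapsto> y / |y|^2 gives
  y \<mapsto> (y + |y|^2 v) / (1 + 2 v\<bullet>y + |v|^2 |y|^2); its 2-jet at 0 is
  y + |y|^2 v - 2 (v\<bullet>y) y.\<close>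

definition inversion_transl_den :: "'a::real_inner \<Rightarrow> 'a \<Rightarrow> real" where
  "inversion_transl_den v y = 1 + 2 * (v \<bullet> y) + (v \<bullet> v) * (y \<bullet> y)"

definition inversion_transl :: "'a::real_inner \<Rightarrow> 'a \<Rightarrow> 'a" where
  "inversion_transl v y = (1 / inversion_transl_den v y) *\<^sub>R (y + (y \<bullet> y) *\<^sub>R v)"

definition inversion_transl_quadratic :: "'a::real_inner \<Rightarrow> 'a \<Rightarrow> 'a" where
  "inversion_transl_quadratic v y = (y \<bullet> y) *\<^sub>R v - (2 * (v \<bullet> y)) *\<^sub>R y"

lemma P_a_eq_scaleR:
  assumes "k \<ge> 1"
  shows "P_a k = (\<lambda>y::real^'n. (1 / real k) *\<^sub>R y)"
proof
  fix y :: "real^'n"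
  show "P_a k y = (1 / real k) *\<^sub>R y"
  proof (cases "y = 0")
    case True then show ?thesis by (simp add: P_a_def phibar_inv_def rho_a_def phibar_def)
  next
    case False
    then have n: "norm y > 0" by simp
    have "P_a k y = (1 / (norm (real k *\<^sub>R ((1 / (norm y)^2) *\<^sub>R y)))\<^sup>2) *\<^sub>R (real k *\<^sub>R ((1 / (norm y)^2) *\<^sub>R y))"
      using False by (simp add: P_a_def phibar_inv_def rho_a_def phibar_def)
    also have "\<dots> = (1 / real k) *\<^sub>R y"
      using n assms by (simp add: power_mult_distrib field_simps power2_eq_square)
    finally show ?thesis .
  qed
qed

lemma P_b_eq_inversion_transl: "P_b (B::real^'n^'n) i = inversion_transl (column i B)"
proof
  fix y :: "real^'n"
  define v where "v = column i B"
  show "P_b B i y = inversion_transl (column i B) y"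
  proof (cases "y = 0")
    case True then show ?thesis by (simp add: P_b_def phibar_inv_def rho_b_def phibar_def inversion_transl_def)
  next
    case False
    define s where "s = y \<bullet> y"
    have s: "s > 0" using False by (simp add: s_def)
    have ns: "(norm y)^2 = s" by (simp add: s_def power2_norm_eq_inner)
    define x where "x = (1 / s) *\<^sub>R y + v"
    have P: "P_b B i y = (1 / (x \<bullet> x)) *\<^sub>R x"
      using False by (simp add: P_b_def phibar_inv_def rho_b_def phibar_def x_def v_def ns power2_norm_eq_inner s_def)
    have xx: "x \<bullet> x = inversion_transl_den v y / s"
      using s by (simp add: x_def inversion_transl_den_def inner_add_left inner_add_right s_def[symmetric] field_simps inner_commute power2_eq_square)
    show ?thesis
    proof (cases "inversion_transl_den v y = 0")
      case True
      then have "x = 0" using xx by simp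
      then show ?thesis using True by (simp add: P inversion_transl_def v_def[symmetric])
    next
      case d: False
      have "(1 / (x \<bullet> x)) *\<^sub>R x = (1 / inversion_transl_den v y) *\<^sub>R (y + s *\<^sub>R v)"
      proof -
        have "(1 / (x \<bullet> x)) *\<^sub>R x = (s / inversion_transl_den v y) *\<^sub>R x" using xx by simp
        also have "\<dots> = (1 / inversion_transl_den v y) *\<^sub>R (y + s *\<^sub>R v)"
          unfolding x_def using s d by (simp add: scaleR_add_right)
        finally show ?thesis .
      qed
      then show ?thesis by (simp add: P inversion_transl_def v_def[symmetric] s_def)
    qed
  qed
qed



definition inversion_transl_deriv :: "'a::real_inner \<Rightarrow> 'a \<Rightarrow> 'a \<Rightarrow> 'a" where
  "inversion_transl_deriv v y h = (1 / inversion_transl_den v y) *\<^sub>R (h + (2 * (y \<bullet> h)) *\<^sub>R v)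
     - ((2 * (v \<bullet> h) + (v \<bullet> v) * (2 * (y \<bullet> h))) / (inversion_transl_den v y)^2) *\<^sub>R (y + (y \<bullet> y) *\<^sub>R v)"

lemma has_derivative_inversion_transl:
  assumes nz: "inversion_transl_den v y \<noteq> 0"
  shows "(inversion_transl v has_derivative inversion_transl_deriv v y) (at y)"
proof -
  have d1: "(inversion_transl_den v has_derivative (\<lambda>h. 2 * (v \<bullet> h) + (v \<bullet> v) * (y \<bullet> h + h \<bullet> y))) (at y)"
    unfolding inversion_transl_den_def[abs_def] by (auto intro!: derivative_eq_intros)
  have d2: "((\<lambda>y. y + (y \<bullet> y) *\<^sub>R v) has_derivative (\<lambda>h. h + (y \<bullet> h + h \<bullet> y) *\<^sub>R v)) (at y)"
    by (auto intro!: derivative_eq_intros)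
  have "((\<lambda>y. inverse (inversion_transl_den v y) *\<^sub>R (y + (y \<bullet> y) *\<^sub>R v)) has_derivative
     (\<lambda>h. inverse (inversion_transl_den v y) *\<^sub>R (h + (y \<bullet> h + h \<bullet> y) *\<^sub>R v)
        + (- (inverse (inversion_transl_den v y) * (2 * (v \<bullet> h) + (v \<bullet> v) * (y \<bullet> h + h \<bullet> y)) * inverse (inversion_transl_den v y))) *\<^sub>R (y + (y \<bullet> y) *\<^sub>R v))) (at y)"
    by (rule has_derivative_scaleR[OF Deriv.has_derivative_inverse[OF nz d1] d2])
  moreover have "(\<lambda>y. inverse (inversion_transl_den v y) *\<^sub>R (y + (y \<bullet> y) *\<^sub>R v)) = inversion_transl v"
    by (simp add: inversion_transl_def[abs_def] inverse_eq_divide)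
  moreover have "(\<lambda>h. inverse (inversion_transl_den v y) *\<^sub>R (h + (y \<bullet> h + h \<bullet> y) *\<^sub>R v)
        + (- (inverse (inversion_transl_den v y) * (2 * (v \<bullet> h) + (v \<bullet> v) * (y \<bullet> h + h \<bullet> y)) * inverse (inversion_transl_den v y))) *\<^sub>R (y + (y \<bullet> y) *\<^sub>R v)) = inversion_transl_deriv v y"
    by (auto simp: fun_eq_iff inversion_transl_deriv_def inner_commute power2_eq_square inverse_eq_divide algebra_simps add_divide_distrib scaleR_add_left)
  ultimately show ?thesis by simp
qed

lemma jet2_D1_D2_inversion_transl:
  fixes v :: "'a::euclidean_space"
  shows "jet2 (inversion_transl v) (blinfun_apply (D1 (inversion_transl v))) (D2_quadratic (inversion_transl v))"
proof -
  define U where "U = {y. 0 < inversion_transl_den v y}"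
  have "continuous_on UNIV (inversion_transl_den v)"
    unfolding inversion_transl_den_def[abs_def] by (intro continuous_intros)
  then have U: "open U" "0 \<in> U" unfolding U_def
    using open_Collect_less[OF continuous_on_const] by (auto simp: inversion_transl_den_def)
  have fd: "frechet_derivative (inversion_transl v) (at y) = inversion_transl_deriv v y" if "y \<in> U" for y
    using has_derivative_inversion_transl[of v y] that frechet_derivative_at by (force simp: U_def)
  show ?thesis
  proof (rule jet2_D1_D2[OF U])
    show "inversion_transl v 0 = 0" by (simp add: inversion_transl_def)
    show "\<forall>x\<in>U. inversion_transl v differentiable at x"
      using has_derivative_inversion_transl by (force simp: U_def differentiable_def)
    show "\<forall>e. (\<lambda>x. frechet_derivative (inversion_transl v) (at x) e) differentiable at 0"
    proof
      fix e
      have "(\<lambda>x. inversion_transl_deriv v x e) differentiable at 0"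
        unfolding inversion_transl_deriv_def by (intro derivative_intros) (auto simp: inversion_transl_den_def)
      then obtain D where D: "((\<lambda>x. inversion_transl_deriv v x e) has_derivative D) (at 0)" by (auto simp: differentiable_def)
      have "((\<lambda>x. frechet_derivative (inversion_transl v) (at x) e) has_derivative D) (at 0)"
        by (rule has_derivative_transform_within_open[OF D U]) (simp add: fd)
      then show "(\<lambda>x. frechet_derivative (inversion_transl v) (at x) e) differentiable at 0" by (auto simp: differentiable_def)
    qed
  qed
qed



lemma inversion_transl_remainder_eq:
  fixes v y :: "'a::real_inner"
  shows "(y + (y \<bullet> y) *\<^sub>R v) - inversion_transl_den v y *\<^sub>R (y + inversion_transl_quadratic v y) =
    (- 2 * (v \<bullet> y) * (y \<bullet> y) - (v \<bullet> v) * (y \<bullet> y)^2) *\<^sub>R v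
    + (4 * (v \<bullet> y)^2 - (v \<bullet> v) * (y \<bullet> y) + 2 * (v \<bullet> v) * (y \<bullet> y) * (v \<bullet> y)) *\<^sub>R y"
  by (simp add: inversion_transl_den_def inversion_transl_quadratic_def algebra_simps power2_eq_square scaleR_add_left)

lemma inversion_transl_remainder_bound:
  fixes v y :: "'a::real_inner"
  assumes ny: "norm y \<le> 1"
  shows "norm ((y + (y \<bullet> y) *\<^sub>R v) - inversion_transl_den v y *\<^sub>R (y + inversion_transl_quadratic v y)) \<le> (7 * (norm v)^2 + 3 * (norm v)^3) * (norm y)^3"
proof -
  define p where "p = v \<bullet> y"
  define a where "a = norm y"
  define b where "b = norm v"
  have a0: "0 \<le> a" and b0: "0 \<le> b" and a1: "a \<le> 1" using ny by (auto simp: a_def b_def)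
  have s: "y \<bullet> y = a^2" and w: "v \<bullet> v = b^2" by (simp_all add: a_def b_def power2_norm_eq_inner)
  have p: "\<bar>p\<bar> \<le> b * a" unfolding p_def a_def b_def by (rule Cauchy_Schwarz_ineq2)
  have p2: "p^2 \<le> b^2 * a^2"
  proof -
    have "p^2 = \<bar>p\<bar>^2" by simp
    also have "\<dots> \<le> (b * a)^2" using p by (intro power_mono) auto
    finally show ?thesis by (simp add: power_mult_distrib)
  qed
  have a43: "a^4 \<le> a^3" using a0 a1 by (simp add: power_decreasing)
  have "norm ((y + (y \<bullet> y) *\<^sub>R v) - inversion_transl_den v y *\<^sub>R (y + inversion_transl_quadratic v y))
     = norm ((- 2 * p * a^2 - b^2 * (a^2)^2) *\<^sub>R v + (4 * p^2 - b^2 * a^2 + 2 * b^2 * a^2 * p) *\<^sub>R y)"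
    unfolding inversion_transl_remainder_eq by (simp add: s w p_def)
  also have "\<dots> \<le> \<bar>- 2 * p * a^2 - b^2 * (a^2)^2\<bar> * b + \<bar>4 * p^2 - b^2 * a^2 + 2 * b^2 * a^2 * p\<bar> * a"
    by (rule order_trans[OF norm_triangle_ineq]) (simp add: a_def b_def)
  also have "\<dots> \<le> (2 * \<bar>p\<bar> * a^2 + b^2 * a^4) * b + (4 * p^2 + b^2 * a^2 + 2 * b^2 * a^2 * \<bar>p\<bar>) * a"
  proof (intro add_mono mult_right_mono)
    show "\<bar>- 2 * p * a^2 - b^2 * (a^2)^2\<bar> \<le> 2 * \<bar>p\<bar> * a^2 + b^2 * a^4"
      by (rule order_trans[OF abs_triangle_ineq4]) (simp add: abs_mult power_mult[symmetric])
    show "\<bar>4 * p^2 - b^2 * a^2 + 2 * b^2 * a^2 * p\<bar> \<le> 4 * p^2 + b^2 * a^2 + 2 * b^2 * a^2 * \<bar>p\<bar>"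
      by (rule order_trans[OF abs_triangle_ineq], rule add_mono[OF abs_triangle_ineq4[THEN order_trans]]) (auto simp: abs_mult)
  qed (use a0 b0 in auto)
  also have "\<dots> = 2 * (\<bar>p\<bar> * (a^2 * b)) + b^3 * a^4 + 4 * (p^2 * a) + b^2 * a^3 + 2 * b^2 * a^3 * \<bar>p\<bar>"
    by (simp add: algebra_simps power2_eq_square power3_eq_cube)
  also have "\<dots> \<le> 2 * ((b * a) * (a^2 * b)) + b^3 * a^3 + 4 * ((b^2 * a^2) * a) + b^2 * a^3 + 2 * b^2 * a^3 * (b * a)"
  proof (intro add_mono mult_left_mono mult_right_mono p p2 a43)
  qed (use a0 b0 in auto)
  also have "\<dots> \<le> 2 * ((b * a) * (a^2 * b)) + b^3 * a^3 + 4 * ((b^2 * a^2) * a) + b^2 * a^3 + 2 * b^2 * a^3 * b"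
  proof -
    have "b * a \<le> b" using a1 b0 a0 by (metis mult_left_le mult.commute)
    then have "2 * b^2 * a^3 * (b * a) \<le> 2 * b^2 * a^3 * b" using a0 b0 by (intro mult_left_mono) auto
    then show ?thesis by linarith
  qed
  also have "\<dots> = (7 * b^2 + 3 * b^3) * a^3"
    by (simp add: algebra_simps power2_eq_square power3_eq_cube)
  finally show ?thesis by (simp add: a_def b_def)
qed

lemma jet2_inversion_transl:
  fixes v :: "'a::real_inner"
  shows "jet2 (inversion_transl v) (\<lambda>y. y) (inversion_transl_quadratic v)"
  unfolding jet2_def
proof (rule little_o2_cubic_bound[of "min 1 (1 / (4 * norm v + 1))" _ "2 * (7 * (norm v)^2 + 3 * (norm v)^3)"])
  show "min 1 (1 / (4 * norm v + 1)) > 0" by (simp add: add_nonneg_pos)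
  fix y :: 'a assume y: "norm y < min 1 (1 / (4 * norm v + 1))"
  define den where "den = inversion_transl_den v y"
  define N where "N = (y + (y \<bullet> y) *\<^sub>R v) - den *\<^sub>R (y + inversion_transl_quadratic v y)"
  have quarter: "b * (1 / (4 * b + 1)) \<le> 1/4" if "b \<ge> 0" for b :: real
    using that by (simp add: field_simps)
  have "norm v * norm y \<le> norm v * (1 / (4 * norm v + 1))"
    using y by (intro mult_left_mono) auto
  also have "\<dots> \<le> 1/4" by (rule quarter) simp
  finally have "\<bar>v \<bullet> y\<bar> \<le> 1/4" using Cauchy_Schwarz_ineq2[of v y] by linarith
  moreover have "(v \<bullet> v) * (y \<bullet> y) \<ge> 0" by simp
  ultimately have den: "den \<ge> 1/2" unfolding den_def inversion_transl_den_def by linarith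
  have "inversion_transl v y - y - inversion_transl_quadratic v y = (1 / den) *\<^sub>R N"
    using den by (simp add: N_def den_def inversion_transl_def scaleR_diff_right)
  then have "norm (inversion_transl v y - y - inversion_transl_quadratic v y) = norm N / den"
    using den by simp
  also have "\<dots> \<le> 2 * norm N"
    using den mult_left_mono[of 1 "2 * den" "norm N"] by (simp add: divide_le_eq mult.assoc)
  also have "\<dots> \<le> 2 * ((7 * (norm v)^2 + 3 * (norm v)^3) * (norm y)^3)"
    using inversion_transl_remainder_bound[of y v] y by (simp add: N_def den_def)
  finally show "norm (inversion_transl v y - y - inversion_transl_quadratic v y)
      \<le> 2 * (7 * (norm v)^2 + 3 * (norm v)^3) * (norm y)^3"
    by (simp only: mult.assoc)
qed

lemma inversion_transl_quadratic_scaleR: "inversion_transl_quadratic v (t *\<^sub>R x) = t^2 *\<^sub>R inversion_transl_quadratic v x"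
  by (simp add: inversion_transl_quadratic_def algebra_simps power2_eq_square)

lemma D_inversion_transl:
  fixes v :: "'a::euclidean_space"
  shows "D1 (inversion_transl v) = id_blinfun"
    and "D2_quadratic (inversion_transl v) = inversion_transl_quadratic v"
proof -
  have "blinfun_apply (D1 (inversion_transl v)) = id \<and> D2_quadratic (inversion_transl v) = inversion_transl_quadratic v"
    using jet2_unique[OF jet2_D1_D2_inversion_transl[of v] jet2_inversion_transl[of v] _ bounded_linear.linear[OF blinfun.bounded_linear_right]
        linear_id[unfolded id_def] D2_quadratic_scaleR inversion_transl_quadratic_scaleR]
    by (simp add: id_def)
  then show "D1 (inversion_transl v) = id_blinfun" "D2_quadratic (inversion_transl v) = inversion_transl_quadratic v"
    by (auto intro: blinfun_eqI)
qed

lemma D1_P_a: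
  assumes "k \<ge> 1"
  shows "D1 (P_a k :: real^'n \<Rightarrow> real^'n) = (1 / real k) *\<^sub>R id_blinfun"
proof -
  have d: "((\<lambda>y::real^'n. (1 / real k) *\<^sub>R y) has_derivative (\<lambda>y. (1 / real k) *\<^sub>R y)) (at 0)"
    by (rule bounded_linear.has_derivative[OF bounded_linear_scaleR_right has_derivative_ident])
  show ?thesis unfolding D1_def P_a_eq_scaleR[OF assms] frechet_derivative_at[OF d, symmetric]
    by (rule blinfun_eqI) (simp add: bounded_linear_Blinfun_apply bounded_linear_scaleR_right blinfun.scaleR_left)
qed

lemma D_P_b:
  fixes B :: "real^'n^'n"
  shows "D1 (P_b B i) = id_blinfun"
    and "D2_quadratic (P_b B i) = inversion_transl_quadratic (column i B)"
  using D_inversion_transl[of "column i B"] by (simp_all add: P_b_eq_inversion_transl)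

section \<open>Rigidity of the linear parts\<close>

lemma funpow_blinfun_linearization:
  fixes b :: "'a::real_normed_vector \<Rightarrow>\<^sub>L 'a"
  defines "M \<equiv> b - id_blinfun"
  shows "norm ((blinfun_apply b ^^ m) x - x - real m *\<^sub>R M x)
     \<le> (norm M)^2 * (real m)^2 * (1 + norm M)^m * norm x"
proof (induction m)
  case 0 then show ?case by simp
next
  case (Suc m)
  define \<mu> where "\<mu> = norm M"
  define r where "r = \<mu>^2 * (real m)^2 * (1 + \<mu>)^m"
  define y where "y = (blinfun_apply b ^^ m) x"
  define R where "R = y - x - real m *\<^sub>R M x"
  have \<mu>0: "\<mu> \<ge> 0" by (simp add: \<mu>_def)
  have R: "norm R \<le> r * norm x" using Suc by (simp add: R_def y_def r_def \<mu>_def)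
  have r0: "r \<ge> 0" using \<mu>0 by (simp add: r_def)
  have hby: "b y = y + M y" by (simp add: M_def blinfun.diff_left)
  have eq: "(blinfun_apply b ^^ Suc m) x - x - real (Suc m) *\<^sub>R M x = R + real m *\<^sub>R M (M x) + M R"
  proof -
    have "y - x = real m *\<^sub>R M x + R" by (simp add: R_def)
    then have "M y - M x = real m *\<^sub>R M (M x) + M R"
      by (metis blinfun.add_right blinfun.diff_right blinfun.scaleR_right)
    then show ?thesis
      by (simp add: y_def[symmetric] hby R_def algebra_simps)
  qed
  have "norm (R + real m *\<^sub>R M (M x) + M R) \<le> norm R + real m * (\<mu> * (\<mu> * norm x)) + \<mu> * norm R"
  proof -
    have "norm (M (M x)) \<le> \<mu> * (\<mu> * norm x)"
      unfolding \<mu>_def by (rule order_trans[OF norm_blinfun]) (intro mult_left_mono norm_blinfun, simp)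
    moreover have "norm (M R) \<le> \<mu> * norm R" unfolding \<mu>_def by (rule norm_blinfun)
    ultimately show ?thesis
      by (intro order_trans[OF norm_triangle_ineq] add_mono order_trans[OF norm_triangle_ineq]) (auto intro: mult_left_mono)
  qed
  also have "\<dots> \<le> r * norm x + real m * (\<mu> * (\<mu> * norm x)) + \<mu> * (r * norm x)"
    using R \<mu>0 by (intro add_mono mult_left_mono) auto
  also have "\<dots> = ((1 + \<mu>) * r + real m * \<mu>^2) * norm x" by (simp add: algebra_simps power2_eq_square)
  also have "\<dots> \<le> (\<mu>^2 * (real (Suc m))^2 * (1 + \<mu>)^(Suc m)) * norm x"
  proof (intro mult_right_mono)
    define P where "P = (1 + \<mu>)^(Suc m)"
    have P1: "P \<ge> 1" unfolding P_def using \<mu>0 by (intro one_le_power) simp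
    have h: "2 * real m + 1 \<le> (2 * real m + 1) * P" using mult_left_mono[OF P1, of "2 * real m + 1"] by simp
    then have "real m \<le> (2 * real m + 1) * P" by linarith
    then have "\<mu>^2 * ((real m)^2 * P + real m) \<le> \<mu>^2 * ((real m)^2 * P + (2 * real m + 1) * P)"
      by (intro mult_left_mono) auto
    moreover have "(1 + \<mu>) * r + real m * \<mu>^2 = \<mu>^2 * ((real m)^2 * P + real m)"
      by (simp add: r_def P_def algebra_simps power2_eq_square)
    moreover have "\<mu>^2 * (real (Suc m))^2 * (1 + \<mu>)^(Suc m) = \<mu>^2 * ((real m)^2 * P + (2 * real m + 1) * P)"
      by (simp add: P_def algebra_simps power2_eq_square)
    ultimately show "(1 + \<mu>) * r + real m * \<mu>^2 \<le> \<mu>^2 * (real (Suc m))^2 * (1 + \<mu>)^(Suc m)"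
      by linarith
  qed simp
  finally show ?case using eq by (simp add: \<mu>_def)
qed

lemma blinfun_eq_0_of_half_bound:
  fixes M :: "'a::real_normed_vector \<Rightarrow>\<^sub>L 'b::real_normed_vector"
  assumes "\<And>x. norm (M x) \<le> norm M / 2 * norm x"
  shows "M = 0"
proof -
  have "norm M \<le> norm M / 2" by (rule norm_blinfun_bound) (use assms in auto)
  then show ?thesis by simp
qed

lemma funpow_conj_identity:
  fixes a b :: "'a::real_normed_vector \<Rightarrow>\<^sub>L 'a" and k :: nat
  assumes k: "k \<noteq> 0" and rel: "a (b x) = (blinfun_apply b ^^ k) (a x)"
  defines "M \<equiv> b - id_blinfun" and "E \<equiv> a - (1 / real k) *\<^sub>R id_blinfun"
  shows "(1 - 1 / real k) *\<^sub>R M x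
    = E (M x) - real k *\<^sub>R M (E x) - ((blinfun_apply b ^^ k) (a x) - a x - real k *\<^sub>R M (a x))"
proof -
  have ax: "a y = (1 / real k) *\<^sub>R y + E y" for y
    by (simp add: E_def blinfun.diff_left blinfun.scaleR_left)
  have "a (b x) = a x + (1 / real k) *\<^sub>R M x + E (M x)"
    by (simp add: M_def blinfun.diff_left blinfun.diff_right ax algebra_simps)
  moreover have "real k *\<^sub>R M (a x) = M x + real k *\<^sub>R M (E x)"
    using k by (simp add: ax blinfun.add_right blinfun.scaleR_right scaleR_add_right)
  ultimately show ?thesis using rel by (simp add: algebra_simps)
qed

text \<open>The right-hand side of the identity above is of order \<epsilon> |b - 1|.\<close>
lemma funpow_conj_estimate:
  fixes a b :: "'a::real_normed_vector \<Rightarrow>\<^sub>L 'a" and k :: nat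
  assumes k: "k \<ge> 2" and rel: "\<And>x. a (b x) = (blinfun_apply b ^^ k) (a x)"
    and ea: "norm (a - (1 / real k) *\<^sub>R id_blinfun) \<le> \<epsilon>" and eb: "norm (b - id_blinfun) \<le> \<epsilon>"
    and e1: "\<epsilon> \<le> 1"
  shows "(1 - 1 / real k) * norm ((b - id_blinfun) x)
    \<le> \<epsilon> * (1 + real k + 2 * (real k)^2 * 2^k) * norm (b - id_blinfun) * norm x"
proof -
  define M where "M = b - id_blinfun"
  define \<mu> where "\<mu> = norm M"
  define E where "E = a - (1 / real k) *\<^sub>R id_blinfun"
  define K where "K = real k"
  define R where "R = (blinfun_apply b ^^ k) (a x) - a x - K *\<^sub>R M (a x)"
  have K2: "K \<ge> 2" using k by (simp add: K_def)
  have \<mu>0: "\<mu> \<ge> 0" and \<mu>\<epsilon>: "\<mu> \<le> \<epsilon>" using eb by (simp_all add: \<mu>_def M_def)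
  have Exb: "norm (E y) \<le> \<epsilon> * norm y" for y
    using norm_blinfun[of E y] mult_right_mono[OF ea norm_ge_zero[of y]] by (simp add: E_def)
  have Mxb: "norm (M y) \<le> \<mu> * norm y" for y unfolding \<mu>_def by (rule norm_blinfun)
  have "norm (a x) \<le> (1 / K + \<epsilon>) * norm x"
    using norm_triangle_ineq[of "(1 / K) *\<^sub>R x" "E x"] Exb[of x] K2
    by (simp add: E_def K_def blinfun.diff_left blinfun.scaleR_left distrib_right)
  also have "\<dots> \<le> 2 * norm x"
  proof (rule mult_right_mono)
    have "1 / K \<le> 1" using K2 by simp
    then show "1 / K + \<epsilon> \<le> 2" using e1 by linarith
  qed simp
  finally have na: "norm (a x) \<le> 2 * norm x" .
  have "norm R \<le> \<mu>^2 * K^2 * (1 + \<mu>)^k * norm (a x)"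
    unfolding R_def K_def \<mu>_def M_def by (rule funpow_blinfun_linearization)
  also have "\<dots> \<le> (\<mu> * \<epsilon>) * K^2 * 2^k * (2 * norm x)"
  proof (rule mult_mono[OF _ na])
    show "\<mu>^2 * K^2 * (1 + \<mu>)^k \<le> (\<mu> * \<epsilon>) * K^2 * 2^k"
      using \<mu>0 \<mu>\<epsilon> e1 K2 by (intro mult_mono power_mono) (auto simp: power2_eq_square mult_left_mono)
  qed (use \<mu>0 \<mu>\<epsilon> in auto)
  finally have nR: "norm R \<le> (\<mu> * \<epsilon>) * K^2 * 2^k * (2 * norm x)" .
  have "(1 - 1 / K) *\<^sub>R M x = E (M x) - K *\<^sub>R M (E x) - R"
    using funpow_conj_identity[OF _ rel] k unfolding M_def E_def K_def R_def by simp
  moreover have "0 \<le> 1 - 1 / K" using K2 by simp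
  ultimately have "(1 - 1 / K) * norm (M x) = norm (E (M x) - K *\<^sub>R M (E x) - R)"
    by (metis abs_of_nonneg norm_scaleR)
  also have "\<dots> \<le> norm (E (M x)) + K * norm (M (E x)) + norm R"
    using K2 by (intro order_trans[OF norm_triangle_ineq4] add_right_mono order_trans[OF norm_triangle_ineq4]) auto
  also have "\<dots> \<le> \<epsilon> * (\<mu> * norm x) + K * (\<mu> * (\<epsilon> * norm x)) + (\<mu> * \<epsilon>) * K^2 * 2^k * (2 * norm x)"
  proof -
    have "\<epsilon> \<ge> 0" using \<mu>0 \<mu>\<epsilon> by linarith
    then have "norm (E (M x)) \<le> \<epsilon> * (\<mu> * norm x)"
      using Exb[of "M x"] mult_left_mono[OF Mxb[of x]] by (meson order_trans)
    moreover have "norm (M (E x)) \<le> \<mu> * (\<epsilon> * norm x)"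
      using Mxb[of "E x"] mult_left_mono[OF Exb[of x] \<mu>0] by linarith
    then have "K * norm (M (E x)) \<le> K * (\<mu> * (\<epsilon> * norm x))" using K2 by simp
    ultimately show ?thesis using nR by linarith
  qed
  also have "\<dots> = \<epsilon> * (1 + K + 2 * K^2 * 2^k) * \<mu> * norm x"
    by (simp add: algebra_simps)
  finally show ?thesis by (simp add: M_def \<mu>_def K_def)
qed

lemma funpow_conj_rigidity:
  fixes k :: nat
  assumes k: "k \<ge> 2"
  obtains \<epsilon> where "\<epsilon> > 0" "\<And>(a :: 'a::real_normed_vector \<Rightarrow>\<^sub>L 'a) (b :: 'a \<Rightarrow>\<^sub>L 'a).
    (\<And>x. blinfun_apply a (blinfun_apply b x) = (blinfun_apply b ^^ k) (blinfun_apply a x)) \<Longrightarrow>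
    norm (a - (1 / real k) *\<^sub>R id_blinfun) < \<epsilon> \<Longrightarrow> norm (b - id_blinfun) < \<epsilon> \<Longrightarrow> b = id_blinfun"
proof -
  define C where "C = 1 + real k + 2 * (real k)^2 * 2^k"
  have C: "C > 0" by (simp add: C_def add_pos_nonneg)
  obtain \<epsilon> where \<epsilon>: "\<epsilon> > 0" "\<epsilon> < 1" "\<epsilon> < 1 / (4 * C)"
    using field_lbound_gt_zero[of 1 "1 / (4 * C)"] C by auto
  show ?thesis
  proof (rule that[OF \<epsilon>(1)])
    fix a b :: "'a \<Rightarrow>\<^sub>L 'a"
    assume rel: "\<And>x. a (b x) = (blinfun_apply b ^^ k) (a x)"
      and ea: "norm (a - (1 / real k) *\<^sub>R id_blinfun) < \<epsilon>" and eb: "norm (b - id_blinfun) < \<epsilon>"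
    have "norm ((b - id_blinfun) x) \<le> norm (b - id_blinfun) / 2 * norm x" for x
    proof -
      have "1 / 2 * norm ((b - id_blinfun) x) \<le> (1 - 1 / real k) * norm ((b - id_blinfun) x)"
        using k by (intro mult_right_mono) (auto simp: field_simps)
      also have "\<dots> \<le> (\<epsilon> * C) * norm (b - id_blinfun) * norm x"
        using funpow_conj_estimate[OF k rel, of \<epsilon> x] ea eb \<epsilon> by (simp add: C_def mult.assoc)
      also have "\<dots> \<le> 1 / 4 * norm (b - id_blinfun) * norm x"
        using \<epsilon>(3) C by (intro mult_right_mono) (auto simp: field_simps)
      finally show ?thesis by simp
    qed
    then have "b - id_blinfun = 0" by (rule blinfun_eq_0_of_half_bound)
    then show "b = id_blinfun" by simp
  qed
qed

section \<open>Rigidity of the quadratic parts\<close>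

lemma inversion_transl_quadratic_polar:
  fixes v u :: "'a::real_inner"
  shows "inversion_transl_quadratic v (v + u) - inversion_transl_quadratic v v - inversion_transl_quadratic v u
    = - ((v \<bullet> v) *\<^sub>R u) - (v \<bullet> v) *\<^sub>R u"
  by (simp add: inversion_transl_quadratic_def inner_add_left inner_add_right inner_commute
      algebra_simps) (metis mult_2_right scaleR_add_left)

lemma inversion_transl_quadratic_self: "inversion_transl_quadratic v v = - ((v \<bullet> v) *\<^sub>R v)"
  by (simp add: inversion_transl_quadratic_def scaleR_diff_left[symmetric])

lemma quadratic_conj_identity:
  fixes c X :: "'a::real_inner \<Rightarrow>\<^sub>L 'a" and T W :: "'a \<Rightarrow>\<^sub>L 'a \<Rightarrow>\<^sub>L 'a"
  assumes crel: "c (T v v) = T (c v) (c v)" and X: "X = c - id_blinfun"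
    and W: "\<And>y. W y y = inversion_transl_quadratic v y"
  defines "S \<equiv> T - W" and "u \<equiv> X v"
  shows "(v \<bullet> v) *\<^sub>R u = S v u + S u v + T u u - X (S v v)"
proof -
  have TS: "T = W + S" by (simp add: S_def)
  have expand: "T v u + T u v + T u u = X (T v v)"
  proof -
    have "T (v + u) (v + u) = T v v + X (T v v)"
      using crel by (simp add: u_def X blinfun.diff_left)
    then show ?thesis by (simp add: blinfun.add_left blinfun.add_right algebra_simps)
  qed
  have "W v u + W u v = - ((v \<bullet> v) *\<^sub>R u) - (v \<bullet> v) *\<^sub>R u"
  proof -
    have "W (v + u) (v + u) = W v v + W v u + W u v + W u u"
      by (simp add: blinfun.add_left blinfun.add_right algebra_simps)
    then show ?thesis using inversion_transl_quadratic_polar[of v u] by (simp add: W algebra_simps)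
  qed
  then have "T v u + T u v = - ((v \<bullet> v) *\<^sub>R u) - (v \<bullet> v) *\<^sub>R u + S v u + S u v"
    by (simp add: TS blinfun.add_left)
  moreover have "X (T v v) = - ((v \<bullet> v) *\<^sub>R u) + X (S v v)"
    by (simp add: TS blinfun.add_left W inversion_transl_quadratic_self blinfun.add_right
        blinfun.minus_right blinfun.scaleR_right blinfun.diff_right u_def)
  ultimately have balance:
    "- ((v \<bullet> v) *\<^sub>R u) - (v \<bullet> v) *\<^sub>R u + S v u + S u v + T u u = - ((v \<bullet> v) *\<^sub>R u) + X (S v v)"
    using expand by simp
  have "(v \<bullet> v) *\<^sub>R u = (- ((v \<bullet> v) *\<^sub>R u) + X (S v v))
      - (- ((v \<bullet> v) *\<^sub>R u) - (v \<bullet> v) *\<^sub>R u + S v u + S u v + T u u) + (S v u + S u v + T u u) - X (S v v)"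
    by (simp add: algebra_simps)
  then show ?thesis unfolding balance by simp
qed

text \<open>In the identity above every term on the right is of order (\<sigma> + |X|) |X v| or |X| \<sigma>,
  with \<sigma> the distance from T to the quadratic part of the translation by v.\<close>
lemma quadratic_conj_column_estimate:
  fixes c X :: "'a::real_inner \<Rightarrow>\<^sub>L 'a" and T W :: "'a \<Rightarrow>\<^sub>L 'a \<Rightarrow>\<^sub>L 'a"
  assumes crel: "c (T v v) = T (c v) (c v)" and X: "X = c - id_blinfun"
    and W: "\<And>y. W y y = inversion_transl_quadratic v y"
    and \<sigma>: "norm (T - W) \<le> \<sigma>" and \<tau>: "norm T \<le> \<tau>"
    and small: "2 * \<sigma> + \<tau> * norm X \<le> norm v / 2" and v: "v \<noteq> 0"
  shows "norm (X v) \<le> 2 * norm X * \<sigma>"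
proof -
  define u where "u = X v"
  define S where "S = T - W"
  define \<xi> where "\<xi> = norm X"
  have key: "(v \<bullet> v) *\<^sub>R u = S v u + S u v + T u u - X (S v v)"
    unfolding u_def S_def by (rule quadratic_conj_identity[OF crel X W])
  have nv: "norm v > 0" using v by simp
  have \<tau>0: "\<tau> \<ge> 0" using \<tau> norm_ge_zero order_trans by blast
  have \<xi>0: "\<xi> \<ge> 0" by (simp add: \<xi>_def)
  have nu: "norm u \<le> \<xi> * norm v" unfolding u_def \<xi>_def by (rule norm_blinfun)
  have nS: "norm S \<le> \<sigma>" using \<sigma> by (simp add: S_def)
  have "(norm v)^2 * norm u = norm ((v \<bullet> v) *\<^sub>R u)" by (simp add: power2_norm_eq_inner)
  also have "\<dots> \<le> norm (S v u) + norm (S u v) + norm (T u u) + norm (X (S v v))"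
    unfolding key
    by (intro order_trans[OF norm_triangle_ineq4] add_right_mono order_trans[OF norm_triangle_ineq]
        add_right_mono norm_triangle_ineq)
  also have "\<dots> \<le> \<sigma> * norm v * norm u + \<sigma> * norm u * norm v + \<tau> * norm u * (\<xi> * norm v) + \<xi> * (\<sigma> * norm v * norm v)"
  proof (intro add_mono)
    show "norm (S v u) \<le> \<sigma> * norm v * norm u"
      by (rule order_trans[OF norm_blinfun_bilinear]) (intro mult_right_mono nS, auto)
    show "norm (S u v) \<le> \<sigma> * norm u * norm v"
      by (rule order_trans[OF norm_blinfun_bilinear]) (intro mult_right_mono nS, auto)
    show "norm (T u u) \<le> \<tau> * norm u * (\<xi> * norm v)"
      by (rule order_trans[OF norm_blinfun_bilinear]) (intro mult_mono nu \<tau>, auto simp: \<tau>0)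
    have "norm (S v v) \<le> \<sigma> * norm v * norm v"
      by (rule order_trans[OF norm_blinfun_bilinear]) (intro mult_right_mono nS, auto)
    then show "norm (X (S v v)) \<le> \<xi> * (\<sigma> * norm v * norm v)"
      unfolding \<xi>_def by (rule order_trans[OF norm_blinfun mult_left_mono]) auto
  qed
  also have "\<dots> = (2 * \<sigma> + \<tau> * \<xi>) * norm v * norm u + \<xi> * \<sigma> * (norm v)^2"
    by (simp add: algebra_simps power2_eq_square)
  also have "\<dots> \<le> (norm v / 2) * norm v * norm u + \<xi> * \<sigma> * (norm v)^2"
    using small by (intro add_right_mono mult_right_mono) (auto simp: \<xi>_def)
  finally have "(norm v)^2 * (norm u / 2) \<le> (norm v)^2 * (\<xi> * \<sigma>)"
    by (simp add: power2_eq_square algebra_simps)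
  then have "norm u / 2 \<le> \<xi> * \<sigma>" using nv by simp
  then show ?thesis by (simp add: u_def \<xi>_def)
qed

lemma invertible_column_norm_lower_bound:
  assumes "invertible (B :: real^'n^'n)"
  obtains m where "m > 0" "\<And>i. m \<le> norm (column i B)"
proof -
  obtain A' :: "real^'n^'n" where A': "A' ** B = mat 1" using assms unfolding invertible_def by blast
  have "column i B \<noteq> 0" for i
  proof
    assume "column i B = 0"
    then have "\<And>j. B $ j $ i = 0" by (simp add: column_def vec_eq_iff)
    then have "(A' ** B) $ i $ i = 0" by (simp add: matrix_matrix_mult_def)
    with A' show False by (simp add: mat_def)
  qed
  moreover have "Min (range (\<lambda>i. norm (column i B))) \<in> range (\<lambda>i. norm (column i B))"
    by (rule Min_in) auto
  ultimately show ?thesis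
    by (intro that[of "Min (range (\<lambda>i. norm (column i B)))"] Min_le) auto
qed

lemma invertible_norm_blinfun_le_columns:
  assumes "invertible (B :: real^'n^'n)"
  obtains C where "C > 0"
    "\<And>X \<delta>. (\<And>i. norm ((X :: (real^'n) \<Rightarrow>\<^sub>L (real^'n)) (column i B)) \<le> \<delta>) \<Longrightarrow> norm X \<le> C * \<delta>"
proof -
  obtain A' :: "real^'n^'n" where A': "B ** A' = mat 1" using assms unfolding invertible_def by blast
  obtain K where K: "K > 0" "\<And>x. norm (A' *v x) \<le> norm x * K"
    using bounded_linear.pos_bounded[OF matrix_vector_mul_bounded_linear[of A']] by blast
  show ?thesis
  proof (rule that[of "real CARD('n) * K"])
    show "real CARD('n) * K > 0" using K by simp
    fix X :: "(real^'n) \<Rightarrow>\<^sub>L (real^'n)" and \<delta> :: real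
    assume X: "\<And>i. norm (X (column i B)) \<le> \<delta>"
    have \<delta>0: "\<delta> \<ge> 0" using X norm_ge_zero order_trans by blast
    have "norm (X x) \<le> real CARD('n) * K * \<delta> * norm x" for x
    proof -
      define y where "y = A' *v x"
      have "x = B *v y" by (simp add: y_def matrix_vector_mul_assoc A')
      then have "X x = (\<Sum>i\<in>UNIV. (y $ i) *\<^sub>R X (column i B))"
        by (simp add: matrix_mult_sum scalar_mult_eq_scaleR blinfun.sum_right blinfun.scaleR_right)
      then have "norm (X x) \<le> (\<Sum>i\<in>UNIV. \<bar>y $ i\<bar> * norm (X (column i B)))"
        using norm_sum[of "\<lambda>i. (y $ i) *\<^sub>R X (column i B)" UNIV] by simp
      also have "\<dots> \<le> (\<Sum>i\<in>(UNIV::'n set). norm y * \<delta>)"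
        by (intro sum_mono mult_mono component_le_norm_cart X) (auto simp: \<delta>0)
      also have "\<dots> = real CARD('n) * norm y * \<delta>" by simp
      also have "\<dots> \<le> real CARD('n) * (norm x * K) * \<delta>"
        using K(2)[of x] \<delta>0 by (simp add: y_def mult_right_mono)
      finally show ?thesis by (simp add: algebra_simps)
    qed
    then show "norm X \<le> real CARD('n) * K * \<delta>"
      by (intro norm_blinfun_bound) (use K \<delta>0 in auto)
  qed
qed

lemma quadratic_conj_rigidity:
  fixes B :: "real^'n^'n" and W :: "'n \<Rightarrow> (real^'n) \<Rightarrow>\<^sub>L (real^'n) \<Rightarrow>\<^sub>L (real^'n)" and k :: nat
  assumes k: "k \<ge> 2" and B: "invertible B"
    and W: "\<And>i y. W i y y = inversion_transl_quadratic (column i B) y"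
  obtains \<epsilon> where "\<epsilon> > 0"
    "\<And>a T. (\<And>i x. (a :: (real^'n) \<Rightarrow>\<^sub>L (real^'n)) ((T i :: (real^'n) \<Rightarrow>\<^sub>L (real^'n) \<Rightarrow>\<^sub>L (real^'n)) x x)
        = real k *\<^sub>R T i (a x) (a x)) \<Longrightarrow>
      (\<And>i. norm (T i - W i) < \<epsilon>) \<Longrightarrow>
      norm (a - (1 / real k) *\<^sub>R id_blinfun) < \<epsilon> \<Longrightarrow> a = (1 / real k) *\<^sub>R id_blinfun"
proof -
  define K where "K = real k"
  have K2: "K \<ge> 2" using k by (simp add: K_def)
  obtain m where m0: "m > 0" and m: "\<And>i. m \<le> norm (column i B)"
    using invertible_column_norm_lower_bound[OF B] by blast
  define \<omega> where "\<omega> = (\<Sum>i\<in>UNIV. norm (W i))"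
  have \<omega>: "norm (W i) \<le> \<omega>" for i unfolding \<omega>_def by (rule member_le_sum) auto
  have \<omega>0: "\<omega> \<ge> 0" unfolding \<omega>_def by (simp add: sum_nonneg)
  obtain C where C: "C > 0"
    "\<And>X \<delta>. (\<And>i. norm ((X :: (real^'n) \<Rightarrow>\<^sub>L (real^'n)) (column i B)) \<le> \<delta>) \<Longrightarrow> norm X \<le> C * \<delta>"
    using invertible_norm_blinfun_le_columns[OF B] by blast
  have "m / (2 * (2 + (\<omega> + 1) * K)) > 0" using m0 \<omega>0 K2 by (simp add: add_pos_nonneg)
  then obtain \<epsilon>' where \<epsilon>': "\<epsilon>' > 0" "\<epsilon>' < 1" "\<epsilon>' < m / (2 * (2 + (\<omega> + 1) * K))"
    using field_lbound_gt_zero[of 1] by (meson zero_less_one)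
  obtain \<epsilon> where \<epsilon>: "\<epsilon> > 0" "\<epsilon> < \<epsilon>'" "\<epsilon> < 1 / (4 * C)"
    using field_lbound_gt_zero[OF \<epsilon>'(1), of "1 / (4 * C)"] C(1) by auto
  show ?thesis
  proof (rule that[OF \<epsilon>(1)])
    fix a :: "(real^'n) \<Rightarrow>\<^sub>L (real^'n)" and T :: "'n \<Rightarrow> (real^'n) \<Rightarrow>\<^sub>L (real^'n) \<Rightarrow>\<^sub>L (real^'n)"
    assume rel: "\<And>i x. a (T i x x) = real k *\<^sub>R T i (a x) (a x)"
      and TW: "\<And>i. norm (T i - W i) < \<epsilon>" and ea: "norm (a - (1 / real k) *\<^sub>R id_blinfun) < \<epsilon>"
    define c where "c = K *\<^sub>R a"
    define X where "X = c - id_blinfun"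
    have "X = K *\<^sub>R (a - (1 / K) *\<^sub>R id_blinfun)"
      using K2 by (simp add: X_def c_def scaleR_diff_right)
    then have X\<epsilon>: "norm X \<le> K * \<epsilon>"
      using ea K2 by (simp add: K_def)
    have "norm (X (column i B)) \<le> 2 * norm X * \<epsilon>" for i
    proof (rule quadratic_conj_column_estimate[OF _ X_def W])
      show "c (T i (column i B) (column i B)) = T i (c (column i B)) (c (column i B))"
        by (simp add: c_def rel blinfun.scaleR_left blinfun.scaleR_right K_def)
      show "norm (T i - W i) \<le> \<epsilon>" using TW[of i] by simp
      show "norm (T i) \<le> \<omega> + 1"
        using norm_triangle_ineq[of "W i" "T i - W i"] \<omega>[of i] TW[of i] \<epsilon> \<epsilon>' by simp
      have "(\<omega> + 1) * norm X \<le> (\<omega> + 1) * (K * \<epsilon>)" using X\<epsilon> \<omega>0 by (intro mult_left_mono) auto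
      moreover have "\<epsilon> * (2 + (\<omega> + 1) * K) \<le> m / 2"
      proof -
        have D: "2 * (2 + (\<omega> + 1) * K) > 0" using \<omega>0 K2 by (simp add: add_pos_nonneg)
        have "\<epsilon> < m / (2 * (2 + (\<omega> + 1) * K))" using \<epsilon>(2) \<epsilon>'(3) by linarith
        then have "\<epsilon> * (2 * (2 + (\<omega> + 1) * K)) < m" using D by (simp add: less_divide_eq)
        then show ?thesis by (simp add: algebra_simps)
      qed
      ultimately show "2 * \<epsilon> + (\<omega> + 1) * norm X \<le> norm (column i B) / 2"
        using m[of i] by (simp add: algebra_simps)
      show "column i B \<noteq> 0" using m[of i] m0 by auto
    qed
    then have "norm X \<le> C * (2 * norm X * \<epsilon>)" by (rule C(2))
    also have "\<dots> = (4 * C * \<epsilon>) * (norm X / 2)" by (simp add: algebra_simps)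
    also have "\<dots> \<le> 1 * (norm X / 2)"
      using \<epsilon>(3) C(1) by (intro mult_right_mono) (auto simp: field_simps)
    finally have "K *\<^sub>R a = id_blinfun" by (simp add: X_def c_def)
    then have "(1 / K) *\<^sub>R (K *\<^sub>R a) = (1 / K) *\<^sub>R id_blinfun" by simp
    then show "a = (1 / real k) *\<^sub>R id_blinfun" using K2 by (simp add: K_def)
  qed
qed

section \<open>Conjugacy relations at 0 and the theorem\<close>

lemma D1_conj_funpow:
  fixes A F :: "'a::euclidean_space \<Rightarrow> 'a"
  assumes A: "local_diffeo0 A" and F: "local_diffeo0 F"
    and rel: "\<forall>\<^sub>F x in nhds 0. A (F x) = (F ^^ k) (A x)"
  shows "D1 A (D1 F x) = (blinfun_apply (D1 F) ^^ k) (D1 A x)"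
proof -
  note A' = local_diffeo0_jet2[OF A] and F' = local_diffeo0_jet2[OF F]
  have "((\<lambda>x. A (F x)) has_derivative (\<lambda>x. D1 A (D1 F x))) (at 0)"
    using has_derivative_compose[OF F'(2), of A] A'(2) F'(1) by simp
  moreover have "((\<lambda>x. (F ^^ k) (A x)) has_derivative (\<lambda>x. (blinfun_apply (D1 F) ^^ k) (D1 A x))) (at 0)"
    using has_derivative_compose[OF A'(2), of "F ^^ k"] has_derivative_funpow[OF F'(2,1), of k] A'(1)
    by simp
  ultimately show ?thesis using has_derivative_germ_unique[OF _ _ rel] by metis
qed

lemma D2_quadratic_conj_funpow:
  fixes A F :: "'a::euclidean_space \<Rightarrow> 'a"
  assumes A: "local_diffeo0 A" and F: "local_diffeo0 F"
    and rel: "\<forall>\<^sub>F x in nhds 0. A (F x) = (F ^^ k) (A x)" and F1: "D1 F = id_blinfun"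
  shows "D1 A (D2_quadratic F x) = real k *\<^sub>R D2_quadratic F (D1 A x)"
proof -
  note A' = local_diffeo0_jet2[OF A] and F' = local_diffeo0_jet2[OF F]
  have JF: "jet2 F (\<lambda>x. x) (D2_quadratic F)" using F'(3) by (simp add: F1)
  have lin: "bounded_linear (blinfun_apply (D1 A))" by (rule blinfun.bounded_linear_right)
  have "jet2 (\<lambda>x. A (F x)) (D1 A) (\<lambda>x. D1 A (D2_quadratic F x) + D2_quadratic A x)"
    using jet2_compose[OF A'(3) JF lin bounded_linear_ident quadratic_form_D2_quadratic
        quadratic_form_D2_quadratic] by simp
  moreover have "jet2 (\<lambda>x. (F ^^ k) (A x)) (D1 A) (\<lambda>x. D2_quadratic A x + real k *\<^sub>R D2_quadratic F (D1 A x))"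
    using jet2_compose[OF jet2_funpow[OF JF quadratic_form_D2_quadratic, of k] A'(3) bounded_linear_ident
        lin quadratic_form_scaleR[OF quadratic_form_D2_quadratic] quadratic_form_D2_quadratic]
    by simp
  ultimately have "(\<lambda>x. D1 A (D2_quadratic F x) + D2_quadratic A x)
      = (\<lambda>x. D2_quadratic A x + real k *\<^sub>R D2_quadratic F (D1 A x))"
    by (rule jet2_unique(2)[OF _ _ rel bounded_linear.linear[OF lin] bounded_linear.linear[OF lin]])
      (simp_all add: D2_quadratic_scaleR blinfun.scaleR_right scaleR_add_right)
  then show ?thesis by (simp add: fun_eq_iff)
qed

lemma dC2_less_D:
  assumes "dC2 F G < \<epsilon>"
  shows "norm (D1 F - D1 G) < \<epsilon>" "norm (D2 F - D2 G) < \<epsilon>"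
  using assms norm_ge_zero[of "D1 F - D1 G"] norm_ge_zero[of "D2 F - D2 G"] unfolding dC2_def by linarith+

theorem lemma2p3:
  fixes B :: "real^'n^'n" and k :: nat
  assumes "k \<ge> 2" and "invertible B"
  shows "\<exists>\<epsilon>>0. \<forall>A Bs. local_action k A Bs \<and> dC2 A (P_a k) < \<epsilon> \<and>
            (\<forall>i. dC2 (Bs i) (P_b B i) < \<epsilon>)
          \<longrightarrow> D1 A = (1 / real k) *\<^sub>R id_blinfun"
proof -
  define W where "W i = (1/2) *\<^sub>R D2 (P_b B i)" for i
  have W: "W i y y = inversion_transl_quadratic (column i B) y" for i y
    using D_P_b(2)[of B i] by (simp add: W_def D2_quadratic_def blinfun.scaleR_left fun_eq_iff)
  obtain \<epsilon>1 where \<epsilon>1: "\<epsilon>1 > 0" and rigid1: "\<And>(a :: (real^'n) \<Rightarrow>\<^sub>L (real^'n)) b.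
      (\<And>x. blinfun_apply a (blinfun_apply b x) = (blinfun_apply b ^^ k) (blinfun_apply a x)) \<Longrightarrow>
      norm (a - (1 / real k) *\<^sub>R id_blinfun) < \<epsilon>1 \<Longrightarrow> norm (b - id_blinfun) < \<epsilon>1 \<Longrightarrow> b = id_blinfun"
    using funpow_conj_rigidity[OF assms(1)] by metis
  obtain \<epsilon>2 where \<epsilon>2: "\<epsilon>2 > 0" and rigid2: "\<And>a T. (\<And>i x. (a :: (real^'n) \<Rightarrow>\<^sub>L (real^'n))
        ((T i :: (real^'n) \<Rightarrow>\<^sub>L (real^'n) \<Rightarrow>\<^sub>L (real^'n)) x x) = real k *\<^sub>R T i (a x) (a x)) \<Longrightarrow>
      (\<And>i. norm (T i - W i) < \<epsilon>2) \<Longrightarrow>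
      norm (a - (1 / real k) *\<^sub>R id_blinfun) < \<epsilon>2 \<Longrightarrow> a = (1 / real k) *\<^sub>R id_blinfun"
    using quadratic_conj_rigidity[OF assms W] by metis
  show ?thesis
  proof (intro exI[of _ "min \<epsilon>1 \<epsilon>2"] conjI allI impI)
    show "min \<epsilon>1 \<epsilon>2 > 0" using \<epsilon>1 \<epsilon>2 by simp
    fix A Bs
    assume H: "local_action k A Bs \<and> dC2 A (P_a k) < min \<epsilon>1 \<epsilon>2 \<and> (\<forall>i. dC2 (Bs i) (P_b B i) < min \<epsilon>1 \<epsilon>2)"
    then have LA: "local_diffeo0 A" "\<And>i. local_diffeo0 (Bs i)"
      and rel: "\<And>i. \<forall>\<^sub>F x in nhds 0. A (Bs i x) = (Bs i ^^ k) (A x)"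
      unfolding local_action_def germ_eq_def by (auto simp: comp_def)
    have dA: "norm (D1 A - (1 / real k) *\<^sub>R id_blinfun) < min \<epsilon>1 \<epsilon>2"
      using dC2_less_D(1)[of A "P_a k" "min \<epsilon>1 \<epsilon>2"] H assms(1) by (simp add: D1_P_a)
    have Bi: "D1 (Bs i) = id_blinfun" for i
      using rigid1[OF D1_conj_funpow[OF LA(1,2) rel]] dA dC2_less_D(1)[of "Bs i" "P_b B i" "min \<epsilon>1 \<epsilon>2"] H
      by (simp add: D_P_b)
    define T where "T i = (1/2) *\<^sub>R D2 (Bs i)" for i
    have "D1 A (T i x x) = real k *\<^sub>R T i (D1 A x) (D1 A x)" for i x
      using D2_quadratic_conj_funpow[OF LA(1,2) rel Bi] by (simp add: T_def D2_quadratic_def blinfun.scaleR_left)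
    moreover have "norm (T i - W i) < \<epsilon>2" for i
      using dC2_less_D(2)[of "Bs i" "P_b B i" "min \<epsilon>1 \<epsilon>2"] H \<epsilon>2 by (simp add: T_def W_def flip: scaleR_diff_right)
    ultimately show "D1 A = (1 / real k) *\<^sub>R id_blinfun" by (rule rigid2) (use dA in simp)
  qed
qed

end
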